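(* Let $(V_1, V_2)$ be a compact normal pair on $\mathcal{H}$ and $k := \dim E_1 \in \{0,1,\dots\}\cup\{\infty\}$. Then there exists an orthonormal basis $\{f_i\}_{i=1}^k$ of $E_1$ consisting of eigenvectors of $[V_2^*, V_1]$ such that, setting $\mathcal{H}_j := \overline{\operatorname{span}}\{V_1^m V_2^n f_j: m, n \geq 0\}$ for $1\le j\le k$ and $\mathcal{H}_0 := \mathcal{H}\ominus\bigoplus_{j=1}^k\mathcal{H}_j$: (1) each $\mathcal{H}_j$ ($0\le j\le k$) is a closed $(V_1,V_2)$-reducing subspace and $\mathcal{H} = \bigoplus_{j=0}^k \mathcal{H}_j$ (orthogonal sum); (2) for $1\le i\le k$, the pair $(V_{1,i}, V_{2,i}) := (V_1|_{\mathcal{H}_i}, V_2|_{\mathcal{H}_i})$ is irreducible; (3) $(V_{1,0}, V_{2,0}) := (V_1|_{\mathcal{H}_0}, V_2|_{\mathcal{H}_0})$ is a shift-unitary pair.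
   Context: All Hilbert spaces are complex and separable. An isometric pair is a pair $(V_1,V_2)$ of commuting isometries on $\mathcal{H}$. An isometry $V$ is a shift if $V^{*m}\to0$ strongly. A BCL pair is an isometric pair with $V_1V_2$ a shift. $[V_2^*,V_1] := V_2^*V_1 - V_1V_2^*$. A compact normal pair is a BCL pair with $[V_2^*,V_1]$ compact and normal. $C(V_1,V_2) := I - V_1V_1^* - V_2V_2^* + V_1V_2V_1^*V_2^*$ and $E_1 := \ker(C(V_1,V_2)-I)$. A subspace is $(V_1,V_2)$-reducing if invariant under $V_1,V_2,V_1^*,V_2^*$; a pair is irreducible if its only reducing subspaces are $\{0\}$ and the whole space. A shift-unitary pair is an isometric pair $(W_1,W_2)$ on $\mathcal{K}$ with $[W_2^*,W_1]=0$ such that $\mathcal{K}=\mathcal{K}_{us}\oplus\mathcal{K}_{su}$ with both summands reducing, $W_1$ unitary and $W_2$ a shift on $\mathcal{K}_{us}$, $W_1$ a shift and $W_2$ unitary on $\mathcal{K}_{su}$ (summands may be zero). *)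

theory Defs
  imports "HOL-Analysis.Analysis"
begin

text \<open>A complex Hilbert space is modelled as a real Hilbert space (real inner product,
complete) carrying a complex scalar multiplication extending the real one, such that
multiplication by the imaginary unit is orthogonal. The complex inner product is then
recovered as cinner below (linear in the first, conjugate-linear in the second argument).
Separability is second countability of the norm topology.\<close>

class chilbert_space = real_inner + complete_space + second_countable_topology +
  fixes cscale :: "complex \<Rightarrow> 'a \<Rightarrow> 'a"
  assumes cscale_add_right: "cscale a (x + y) = cscale a x + cscale a y"
    and cscale_add_left: "cscale (a + b) x = cscale a x + cscale b x"
    and cscale_cscale: "cscale a (cscale b x) = cscale (a * b) x"
    and cscale_of_real: "cscale (complex_of_real r) x = r *\<^sub>R x"
    and inner_cscale_ii: "inner (cscale \<i> x) (cscale \<i> y) = inner x y"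

definition cinner :: "'a::chilbert_space \<Rightarrow> 'a \<Rightarrow> complex" where
  "cinner x y = Complex (inner x y) (inner x (cscale \<i> y))"

definition clinear_op :: "('a::chilbert_space \<Rightarrow> 'a) \<Rightarrow> bool" where
  "clinear_op T \<longleftrightarrow> bounded_linear T \<and> (\<forall>c x. T (cscale c x) = cscale c (T x))"

definition adj :: "('a::chilbert_space \<Rightarrow> 'a) \<Rightarrow> ('a \<Rightarrow> 'a)" where
  "adj T = (THE S. \<forall>x y. cinner (T x) y = cinner x (S y))"

definition is_isometry :: "('a::chilbert_space \<Rightarrow> 'a) \<Rightarrow> bool" where
  "is_isometry V \<longleftrightarrow> clinear_op V \<and> (\<forall>x. norm (V x) = norm x)"

definition is_shift :: "('a::chilbert_space \<Rightarrow> 'a) \<Rightarrow> bool" where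
  "is_shift V \<longleftrightarrow> is_isometry V \<and> (\<forall>x. (\<lambda>m. (adj V ^^ m) x) \<longlonglongrightarrow> 0)"

definition isometric_pair :: "('a::chilbert_space \<Rightarrow> 'a) \<Rightarrow> ('a \<Rightarrow> 'a) \<Rightarrow> bool" where
  "isometric_pair V1 V2 \<longleftrightarrow> is_isometry V1 \<and> is_isometry V2 \<and> V1 \<circ> V2 = V2 \<circ> V1"

definition bcl_pair :: "('a::chilbert_space \<Rightarrow> 'a) \<Rightarrow> ('a \<Rightarrow> 'a) \<Rightarrow> bool" where
  "bcl_pair V1 V2 \<longleftrightarrow> isometric_pair V1 V2 \<and> is_shift (V1 \<circ> V2)"

definition commut :: "('a::chilbert_space \<Rightarrow> 'a) \<Rightarrow> ('a \<Rightarrow> 'a) \<Rightarrow> 'a \<Rightarrow> 'a" where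
  "commut V1 V2 = (\<lambda>x. adj V2 (V1 x) - V1 (adj V2 x))"

definition compact_op :: "('a::chilbert_space \<Rightarrow> 'a) \<Rightarrow> bool" where
  "compact_op T \<longleftrightarrow> clinear_op T \<and> compact (closure (T ` ball 0 1))"

definition normal_op :: "('a::chilbert_space \<Rightarrow> 'a) \<Rightarrow> bool" where
  "normal_op T \<longleftrightarrow> clinear_op T \<and> T \<circ> adj T = adj T \<circ> T"

definition compact_normal_pair :: "('a::chilbert_space \<Rightarrow> 'a) \<Rightarrow> ('a \<Rightarrow> 'a) \<Rightarrow> bool" where
  "compact_normal_pair V1 V2 \<longleftrightarrow> bcl_pair V1 V2 \<and> compact_op (commut V1 V2) \<and> normal_op (commut V1 V2)"

definition defect_op :: "('a::chilbert_space \<Rightarrow> 'a) \<Rightarrow> ('a \<Rightarrow> 'a) \<Rightarrow> 'a \<Rightarrow> 'a" where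
  "defect_op V1 V2 = (\<lambda>x. x - V1 (adj V1 x) - V2 (adj V2 x) + V1 (V2 (adj V1 (adj V2 x))))"

definition E1 :: "('a::chilbert_space \<Rightarrow> 'a) \<Rightarrow> ('a \<Rightarrow> 'a) \<Rightarrow> 'a set" where
  "E1 V1 V2 = {x. defect_op V1 V2 x - x = 0}"

definition csubspace :: "'a::chilbert_space set \<Rightarrow> bool" where
  "csubspace S \<longleftrightarrow> 0 \<in> S \<and> (\<forall>x\<in>S. \<forall>y\<in>S. x + y \<in> S) \<and> (\<forall>c. \<forall>x\<in>S. cscale c x \<in> S)"

definition closed_csubspace :: "'a::chilbert_space set \<Rightarrow> bool" where
  "closed_csubspace S \<longleftrightarrow> csubspace S \<and> closed S"

definition cspan :: "'a::chilbert_space set \<Rightarrow> 'a set" where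
  "cspan S = \<Inter>{T. csubspace T \<and> S \<subseteq> T}"

definition orth_compl :: "'a::chilbert_space set \<Rightarrow> 'a set" where
  "orth_compl S = {x. \<forall>y\<in>S. cinner x y = 0}"

definition orthonormal_basis_of :: "'a::chilbert_space set \<Rightarrow> 'a set \<Rightarrow> bool" where
  "orthonormal_basis_of F E \<longleftrightarrow> F \<subseteq> E \<and> (\<forall>f\<in>F. norm f = 1)
     \<and> (\<forall>f\<in>F. \<forall>g\<in>F. f \<noteq> g \<longrightarrow> cinner f g = 0) \<and> closure (cspan F) = E"

definition reducing :: "('a::chilbert_space \<Rightarrow> 'a) \<Rightarrow> ('a \<Rightarrow> 'a) \<Rightarrow> 'a set \<Rightarrow> bool" where
  "reducing V1 V2 M \<longleftrightarrow> closed_csubspace M \<and> V1 ` M \<subseteq> M \<and> V2 ` M \<subseteq> M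
     \<and> adj V1 ` M \<subseteq> M \<and> adj V2 ` M \<subseteq> M"

text \<open>Irreducibility of the restricted pair (V1|M, V2|M) for a reducing subspace M:
the reducing subspaces of the restriction are exactly the reducing subspaces of
(V1,V2) contained in M (since (Vi|M)* = Vi*|M).\<close>
definition irreducible_on :: "('a::chilbert_space \<Rightarrow> 'a) \<Rightarrow> ('a \<Rightarrow> 'a) \<Rightarrow> 'a set \<Rightarrow> bool" where
  "irreducible_on V1 V2 M \<longleftrightarrow> (\<forall>N. N \<subseteq> M \<longrightarrow> reducing V1 V2 N \<longrightarrow> N = {0} \<or> N = M)"

definition gen_subspace :: "('a::chilbert_space \<Rightarrow> 'a) \<Rightarrow> ('a \<Rightarrow> 'a) \<Rightarrow> 'a \<Rightarrow> 'a set" where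
  "gen_subspace V1 V2 f = closure (cspan {(V1 ^^ m) ((V2 ^^ n) f) | m n. True})"

text \<open>Restriction V|M (M reducing) is a shift: its adjoint is V*|M.\<close>
definition shift_on :: "('a::chilbert_space \<Rightarrow> 'a) \<Rightarrow> 'a set \<Rightarrow> bool" where
  "shift_on V M \<longleftrightarrow> (\<forall>x\<in>M. (\<lambda>m. (adj V ^^ m) x) \<longlonglongrightarrow> 0)"

text \<open>Restriction V|M of an isometry to a reducing subspace is unitary iff onto.\<close>
definition unitary_on :: "('a::chilbert_space \<Rightarrow> 'a) \<Rightarrow> 'a set \<Rightarrow> bool" where
  "unitary_on V M \<longleftrightarrow> V ` M = M"

definition shift_unitary_on :: "('a::chilbert_space \<Rightarrow> 'a) \<Rightarrow> ('a \<Rightarrow> 'a) \<Rightarrow> 'a set \<Rightarrow> bool" where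
  "shift_unitary_on V1 V2 M \<longleftrightarrow> (\<forall>x\<in>M. commut V1 V2 x = 0) \<and>
     (\<exists>Kus Ksu. reducing V1 V2 Kus \<and> reducing V1 V2 Ksu \<and> Kus \<subseteq> M \<and> Ksu \<subseteq> M
        \<and> (\<forall>x\<in>Kus. \<forall>y\<in>Ksu. cinner x y = 0)
        \<and> M = {x + y | x y. x \<in> Kus \<and> y \<in> Ksu}
        \<and> unitary_on V1 Kus \<and> shift_on V2 Kus
        \<and> shift_on V1 Ksu \<and> unitary_on V2 Ksu)"

end

theory Submission
  imports Defs
begin

text \<open>
  The commutator \<open>T = [V\<^sub>2\<^sup>*, V\<^sub>1]\<close> takes values in \<open>E\<^sub>1\<close>, and being normal it vanishes on
  the orthogonal complement of \<open>E\<^sub>1\<close>. So \<open>E\<^sub>1\<close> is invariant under \<open>T\<close> and \<open>T\<^sup>*\<close>, and the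
  compact normal operator \<open>T\<close> has an orthonormal eigenbasis \<open>F\<close> of \<open>E\<^sub>1\<close>.

  For \<open>f \<in> F\<close> with \<open>T f = \<mu> f\<close>, the identities \<open>V\<^sub>1\<^sup>* V\<^sub>2\<^sup>n\<^sup>+\<^sup>1 f = cnj \<mu> V\<^sub>2\<^sup>n f\<close> and
  \<open>V\<^sub>2\<^sup>* V\<^sub>1\<^sup>m\<^sup>+\<^sup>1 f = \<mu> V\<^sub>1\<^sup>m f\<close> show that the closed span \<open>H\<^sub>f\<close> of the vectors
  \<open>V\<^sub>1\<^sup>m V\<^sub>2\<^sup>n f\<close> is reducing. All generators other than \<open>f\<close> are orthogonal to \<open>E\<^sub>1\<close>, so
  \<open>E\<^sub>1 \<inter> H\<^sub>f\<close> is the line through \<open>f\<close>. Hence a reducing subspace of \<open>H\<^sub>f\<close> either contains \<open>f\<close>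
  or is orthogonal to it, which gives irreducibility, and the \<open>H\<^sub>f\<close> are mutually orthogonal.

  On the complement \<open>H\<^sub>0\<close> of all \<open>H\<^sub>f\<close> the commutator vanishes, so \<open>V\<^sub>1\<close> and \<open>V\<^sub>2\<close> doubly
  commute there, and the projection \<open>P = lim V\<^sub>1\<^sup>m V\<^sub>1\<^sup>*\<^sup>m\<close> onto the unitary part of \<open>V\<^sub>1\<close>
  commutes with \<open>V\<^sub>2\<close> and \<open>V\<^sub>2\<^sup>*\<close> on \<open>H\<^sub>0\<close>. On the range of \<open>P\<close>, \<open>V\<^sub>1\<close> is unitary, so \<open>V\<^sub>2\<close> is
  a shift because \<open>V\<^sub>1 V\<^sub>2\<close> is. On the kernel of \<open>P\<close>, \<open>V\<^sub>1\<close> is a shift and \<open>V\<^sub>2\<close> is unitary: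
  as \<open>H\<^sub>0\<close> meets \<open>E\<^sub>1\<close> only in \<open>0\<close>, every vector of \<open>H\<^sub>0\<close> killed by \<open>V\<^sub>2\<^sup>*\<close> is fixed by \<open>V\<^sub>1 V\<^sub>1\<^sup>*\<close>.
\<close>

abbreviation iscale :: "'a::chilbert_space \<Rightarrow> 'a" where "iscale x \<equiv> cscale \<i> x"

section \<open>Complex scalars and the complex inner product\<close>

lemma cscale_zero_right [simp]: "cscale c 0 = (0::'a::chilbert_space)"
  by (metis add.right_neutral add_left_imp_eq cscale_add_right)

lemma cscale_minus_right: "cscale c (- x) = - cscale c (x::'a::chilbert_space)"
  by (metis add.right_inverse add_eq_0_iff cscale_add_right cscale_zero_right)

lemma cscale_diff_right: "cscale c (x - y) = cscale c x - cscale c (y::'a::chilbert_space)"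
  by (metis cscale_add_right cscale_minus_right diff_conv_add_uminus)

lemma cscale_zero_left [simp]: "cscale 0 x = (0::'a::chilbert_space)"
  by (metis cscale_of_real of_real_0 scaleR_zero_left)

lemma cscale_one [simp]: "cscale 1 x = (x::'a::chilbert_space)"
  by (metis cscale_of_real of_real_1 scaleR_one)

lemma cscale_minus_left: "cscale (- c) x = - cscale c (x::'a::chilbert_space)"
  by (metis add.right_inverse add_eq_0_iff cscale_add_left cscale_zero_left)

lemma cscale_scaleR_right: "cscale c (r *\<^sub>R x) = r *\<^sub>R cscale c (x::'a::chilbert_space)"
  by (metis cscale_cscale cscale_of_real mult.commute)

lemma iscale_iscale [simp]: "iscale (iscale x) = - (x::'a::chilbert_space)"
  by (metis cscale_cscale cscale_minus_left cscale_one mult_minus1 power2_eq_square power2_i)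

lemma inner_iscale_left: "inner (iscale x) y = - inner x (iscale (y::'a::chilbert_space))"
proof -
  have "inner (iscale x) y = inner (iscale (iscale x)) (iscale y)" by (rule inner_cscale_ii[symmetric])
  then show ?thesis by simp
qed

lemma inner_iscale_self [simp]: "inner x (iscale (x::'a::chilbert_space)) = 0"
  by (metis inner_commute inner_iscale_left neg_equal_zero)

lemma cscale_Complex: "cscale (Complex a b) x = a *\<^sub>R x + b *\<^sub>R iscale (x::'a::chilbert_space)"
proof -
  have "Complex a b = complex_of_real a + complex_of_real b * \<i>" by (simp add: Complex_eq)
  then show ?thesis by (metis cscale_add_left cscale_cscale cscale_of_real)
qed

lemma cscale_expand: "cscale c x = Re c *\<^sub>R x + Im c *\<^sub>R iscale (x::'a::chilbert_space)"
  by (metis complex.exhaust_sel cscale_Complex)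

lemma norm_cscale: "norm (cscale c x) = cmod c * norm (x::'a::chilbert_space)"
proof -
  define a where "a = Re c"
  define b where "b = Im c"
  have ex: "cscale c x = a *\<^sub>R x + b *\<^sub>R iscale x" unfolding a_def b_def by (rule cscale_expand)
  have i1: "inner (iscale x) (iscale x) = inner x x" by (rule inner_cscale_ii)
  have i2: "inner (iscale x) x = 0" by (metis inner_commute inner_iscale_self)
  have "inner (cscale c x) (cscale c x) = a*a * inner x x + b*b * inner (iscale x) (iscale x)
      + 2*a*b * inner x (iscale x)"
    unfolding ex by (simp add: inner_add_left inner_add_right i2 algebra_simps)
  also have "\<dots> = (a*a + b*b) * inner x x" using i1 by (simp add: algebra_simps)
  finally have "(norm (cscale c x))\<^sup>2 = (cmod c * norm x)\<^sup>2"
    by (simp add: power2_norm_eq_inner[symmetric] cmod_def a_def b_def power_mult_distrib power2_eq_square)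
  then show ?thesis by (simp add: power2_eq_iff_nonneg)
qed

lemma bounded_linear_cscale: "bounded_linear (cscale c :: 'a::chilbert_space \<Rightarrow> 'a)"
  by (rule bounded_linear_intro[where K="cmod c"])
    (auto simp: cscale_add_right cscale_scaleR_right norm_cscale mult.commute)

lemma tendsto_cscale [tendsto_intros]:
  "(f \<longlongrightarrow> l) F \<Longrightarrow> ((\<lambda>x. cscale c (f x)) \<longlongrightarrow> cscale c (l::'a::chilbert_space)) F"
  using bounded_linear.tendsto[OF bounded_linear_cscale] by blast

lemma Re_cinner [simp]: "Re (cinner x y) = inner x y"
  by (simp add: cinner_def)

lemma cinner_eq_0_iff: "cinner x y = 0 \<longleftrightarrow> inner x y = 0 \<and> inner x (iscale y) = 0"
  by (simp add: cinner_def complex_eq_iff)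

lemma cinner_add_left: "cinner (x + y) z = cinner x z + cinner y z"
  by (simp add: cinner_def inner_add_left complex_eq_iff)

lemma cinner_add_right: "cinner x (y + z) = cinner x y + cinner x z"
  by (simp add: cinner_def inner_add_right cscale_add_right complex_eq_iff)

lemma cinner_diff_left: "cinner (x - y) z = cinner x z - cinner y z"
  by (simp add: cinner_def inner_diff_left complex_eq_iff)

lemma cinner_diff_right: "cinner x (y - z) = cinner x y - cinner x z"
  by (simp add: cinner_def inner_diff_right cscale_diff_right complex_eq_iff)

lemma cinner_zero_left [simp]: "cinner 0 x = 0"
  and cinner_zero_right [simp]: "cinner x 0 = 0"
  by (simp_all add: cinner_def complex_eq_iff)

lemma cinner_cscale_left: "cinner (cscale c x) y = c * cinner x y"
proof -
  have "cinner (iscale x) y = \<i> * cinner x y"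
    by (simp add: cinner_def complex_eq_iff inner_iscale_left inner_cscale_ii)
  moreover have "cinner (r *\<^sub>R z) y = complex_of_real r * cinner z y" for r z
    by (simp add: cinner_def complex_eq_iff)
  ultimately have "cinner (cscale c x) y = (complex_of_real (Re c) + \<i> * complex_of_real (Im c)) * cinner x y"
    by (subst cscale_expand) (simp add: cinner_add_left algebra_simps)
  then show ?thesis by (simp add: complex_eq[symmetric])
qed

lemma cinner_commute: "cinner y x = cnj (cinner x y)"
proof -
  have "inner y (iscale x) = - inner x (iscale y)" by (metis inner_commute inner_iscale_left)
  then show ?thesis by (simp add: cinner_def complex_eq_iff inner_commute)
qed

lemma cinner_cscale_right: "cinner x (cscale c y) = cnj c * cinner x y"
  by (metis cinner_commute cinner_cscale_left complex_cnj_cnj complex_cnj_mult)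

lemma cinner_self: "cinner x x = complex_of_real ((norm x)\<^sup>2)"
  by (simp add: cinner_def complex_eq_iff power2_norm_eq_inner)

lemma cinner_self_eq_0 [simp]: "cinner x x = 0 \<longleftrightarrow> x = 0"
  by (simp add: cinner_self)

lemma cinner_eq_0_commute: "cinner x y = 0 \<longleftrightarrow> cinner y x = 0"
  by (metis cinner_commute complex_cnj_zero_iff)

lemma cinner_ext: "(\<And>x. cinner x a = cinner x b) \<Longrightarrow> a = b"
  by (metis cinner_diff_right cinner_self_eq_0 diff_self eq_iff_diff_eq_0)

lemma cinner_ext_left: "(\<And>x. cinner a x = cinner b x) \<Longrightarrow> a = b"
  by (metis cinner_diff_left cinner_self_eq_0 diff_self eq_iff_diff_eq_0)

lemma tendsto_cinner [tendsto_intros]: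
  "(f \<longlongrightarrow> a) F \<Longrightarrow> (g \<longlongrightarrow> b) F \<Longrightarrow> ((\<lambda>n. cinner (f n) (g n)) \<longlongrightarrow> cinner a b) F"
  unfolding cinner_def by (intro tendsto_intros)

section \<open>Subspaces, orthogonal complements and projections\<close>

lemma csubspace_0: "csubspace S \<Longrightarrow> 0 \<in> S"
  by (simp add: csubspace_def)

lemma csubspace_add: "csubspace S \<Longrightarrow> x \<in> S \<Longrightarrow> y \<in> S \<Longrightarrow> x + y \<in> S"
  by (simp add: csubspace_def)

lemma csubspace_cscale: "csubspace S \<Longrightarrow> x \<in> S \<Longrightarrow> cscale c x \<in> S"
  by (simp add: csubspace_def)

lemma csubspace_scaleR: "csubspace S \<Longrightarrow> x \<in> S \<Longrightarrow> r *\<^sub>R x \<in> S"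
  by (metis csubspace_def cscale_of_real)

lemma csubspace_subspace: "csubspace S \<Longrightarrow> subspace S"
  unfolding subspace_def by (metis csubspace_0 csubspace_add csubspace_scaleR)

lemma csubspace_minus: "csubspace S \<Longrightarrow> x \<in> S \<Longrightarrow> - x \<in> S"
  by (metis csubspace_scaleR scaleR_minus1_left)

lemma csubspace_diff: "csubspace S \<Longrightarrow> x \<in> S \<Longrightarrow> y \<in> S \<Longrightarrow> x - y \<in> S"
  by (metis csubspace_add csubspace_minus diff_conv_add_uminus)

lemma csubspace_closure: "csubspace S \<Longrightarrow> csubspace (closure S)"
  unfolding csubspace_def
proof (intro conjI ballI allI)
  assume S: "0 \<in> S \<and> (\<forall>x\<in>S. \<forall>y\<in>S. x + y \<in> S) \<and> (\<forall>c. \<forall>x\<in>S. cscale c x \<in> S)"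
  show "0 \<in> closure S" using S closure_subset by blast
  fix x y assume "x \<in> closure S" "y \<in> closure S"
  then obtain f g where "\<forall>n. f n \<in> S" "f \<longlonglongrightarrow> x" "\<forall>n. g n \<in> S" "g \<longlonglongrightarrow> y"
    unfolding closure_sequential by blast
  with S show "x + y \<in> closure S"
    unfolding closure_sequential by (intro exI[of _ "\<lambda>n. f n + g n"]) (auto intro: tendsto_intros)
next
  fix c x
  assume S: "0 \<in> S \<and> (\<forall>x\<in>S. \<forall>y\<in>S. x + y \<in> S) \<and> (\<forall>c. \<forall>x\<in>S. cscale c x \<in> S)"
    and "x \<in> closure S"
  then obtain f where "\<forall>n. f n \<in> S" "f \<longlonglongrightarrow> x" unfolding closure_sequential by blast
  with S show "cscale c x \<in> closure S"
    unfolding closure_sequential by (intro exI[of _ "\<lambda>n. cscale c (f n)"]) (auto intro: tendsto_intros)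
qed

lemma closed_csubspace_Int:
  "closed_csubspace A \<Longrightarrow> closed_csubspace B \<Longrightarrow> closed_csubspace (A \<inter> B)"
  by (auto simp: closed_csubspace_def csubspace_def)

lemma cspan_csubspace: "csubspace (cspan S)"
  unfolding cspan_def csubspace_def by auto

lemma cspan_superset: "S \<subseteq> cspan S"
  unfolding cspan_def by auto

lemma cspan_minimal: "csubspace T \<Longrightarrow> S \<subseteq> T \<Longrightarrow> cspan S \<subseteq> T"
  unfolding cspan_def by auto

lemma closed_csubspace_ccspan: "closed_csubspace (closure (cspan S))"
  by (simp add: closed_csubspace_def csubspace_closure cspan_csubspace)

lemma ccspan_superset: "S \<subseteq> closure (cspan S)"
  using closure_subset cspan_superset by blast

lemma ccspan_minimal: "closed_csubspace P \<Longrightarrow> S \<subseteq> P \<Longrightarrow> closure (cspan S) \<subseteq> P"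
  by (simp add: closed_csubspace_def closure_minimal cspan_minimal)

lemma ccspan_mono: "A \<subseteq> B \<Longrightarrow> closure (cspan A) \<subseteq> closure (cspan B)"
  by (meson ccspan_minimal ccspan_superset closed_csubspace_ccspan order_trans)

lemma orth_compl_closed_csubspace: "closed_csubspace (orth_compl S)"
proof -
  have "closed {x. cinner x y = 0}" for y
  proof -
    have "{x. cinner x y = 0} = {x. inner x y = 0} \<inter> {x. inner x (iscale y) = 0}"
      by (auto simp: cinner_eq_0_iff)
    then show ?thesis by (auto intro!: closed_Int closed_Collect_eq continuous_intros)
  qed
  moreover have "orth_compl S = (\<Inter>y\<in>S. {x. cinner x y = 0})"
    by (auto simp: orth_compl_def)
  moreover have "csubspace (orth_compl S)"
    unfolding csubspace_def orth_compl_def by (auto simp: cinner_add_left cinner_cscale_left)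
  ultimately show ?thesis by (auto simp: closed_csubspace_def)
qed

lemma orth_compl_sym: "A \<subseteq> orth_compl B \<Longrightarrow> B \<subseteq> orth_compl A"
  unfolding orth_compl_def using cinner_eq_0_commute by blast

lemma orth_compl_ccspan: "A \<subseteq> orth_compl B \<Longrightarrow> closure (cspan A) \<subseteq> orth_compl B"
  by (simp add: ccspan_minimal orth_compl_closed_csubspace)

lemma orth_compl_self: "x \<in> orth_compl S \<Longrightarrow> x \<in> S \<Longrightarrow> x = 0"
  unfolding orth_compl_def by auto

lemma orth_compl_antimono: "A \<subseteq> B \<Longrightarrow> orth_compl B \<subseteq> orth_compl A"
  unfolding orth_compl_def by auto

lemma orth_compl_ccspan_eq: "orth_compl (closure (cspan A)) = orth_compl A"
proof
  show "orth_compl (closure (cspan A)) \<subseteq> orth_compl A"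
    by (rule orth_compl_antimono[OF ccspan_superset])
  have "closure (cspan A) \<subseteq> orth_compl (orth_compl A)"
    by (rule orth_compl_ccspan, rule orth_compl_sym) simp
  then show "orth_compl A \<subseteq> orth_compl (closure (cspan A))"
    by (rule orth_compl_sym)
qed

lemma convex_minimizing_sequence_Cauchy:
  fixes S :: "'a::real_inner set"
  assumes S: "convex S" and Y: "\<And>n. Y n \<in> S"
    and lim: "(\<lambda>n. dist x (Y n)) \<longlonglongrightarrow> infdist x S"
  shows "Cauchy Y"
proof (rule metric_CauchyI)
  fix e :: real assume "e > 0"
  define d where "d = infdist x S"
  have parallelogram:
    "(dist (Y m) (Y n))\<^sup>2 \<le> 2 * (dist x (Y m))\<^sup>2 + 2 * (dist x (Y n))\<^sup>2 - 4 * d\<^sup>2" for m n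
  proof -
    define a b where "a = x - Y m" and "b = x - Y n"
    have "(1/2) *\<^sub>R Y m + (1/2) *\<^sub>R Y n \<in> S"
      using convexD[OF S Y Y, of "1/2" "1/2"] by simp
    then have "d \<le> norm (x - ((1/2) *\<^sub>R Y m + (1/2) *\<^sub>R Y n))"
      unfolding d_def by (metis dist_norm infdist_le)
    moreover have "a + b = 2 *\<^sub>R (x - ((1/2) *\<^sub>R Y m + (1/2) *\<^sub>R Y n))"
      by (simp add: a_def b_def algebra_simps scaleR_2)
    ultimately have "(2 * d)\<^sup>2 \<le> (norm (a + b))\<^sup>2"
      using infdist_nonneg[of x S] by (intro power_mono) (auto simp: d_def)
    moreover have "(norm (a - b))\<^sup>2 + (norm (a + b))\<^sup>2 = 2 * (norm a)\<^sup>2 + 2 * (norm b)\<^sup>2"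
      by (simp add: power2_norm_eq_inner inner_add_left inner_add_right inner_diff_left
          inner_diff_right inner_commute algebra_simps)
    moreover have "a - b = Y n - Y m" by (simp add: a_def b_def)
    ultimately show ?thesis
      by (simp add: a_def b_def dist_norm norm_minus_commute power_mult_distrib)
  qed
  have "(\<lambda>n. (dist x (Y n))\<^sup>2) \<longlonglongrightarrow> d\<^sup>2"
    using lim unfolding d_def by (intro tendsto_intros)
  then have "eventually (\<lambda>n. (dist x (Y n))\<^sup>2 < d\<^sup>2 + e\<^sup>2 / 4) sequentially"
    using \<open>e > 0\<close> by (intro order_tendstoD) auto
  then obtain N where N: "\<And>n. n \<ge> N \<Longrightarrow> (dist x (Y n))\<^sup>2 < d\<^sup>2 + e\<^sup>2 / 4"
    by (auto simp: eventually_sequentially)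
  show "\<exists>M. \<forall>m\<ge>M. \<forall>n\<ge>M. dist (Y m) (Y n) < e"
  proof (intro exI allI impI)
    fix m n assume "N \<le> m" "N \<le> n"
    then have "(dist (Y m) (Y n))\<^sup>2 < e\<^sup>2"
      using parallelogram[of m n] N[of m] N[of n] by linarith
    then show "dist (Y m) (Y n) < e"
      using \<open>e > 0\<close> by (simp add: power_less_imp_less_base)
  qed
qed

lemma closed_convex_closest_point_exists:
  fixes S :: "'a::{real_inner,complete_space} set"
  assumes "closed S" "convex S" "S \<noteq> {}"
  shows "\<exists>p\<in>S. \<forall>y\<in>S. dist x p \<le> dist x y"
proof -
  define d where "d = infdist x S"
  have "\<exists>y\<in>S. dist x y < d + inverse (Suc n)" for n
  proof -
    have "(INF y\<in>S. dist x y) < d + inverse (Suc n)"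
      using assms(3) by (simp add: d_def infdist_notempty)
    then show ?thesis
      using assms(3) by (subst (asm) cINF_less_iff) (auto intro: bdd_belowI2[where m=0])
  qed
  then obtain Y where Y: "\<And>n. Y n \<in> S" "\<And>n. dist x (Y n) < d + inverse (Suc n)"
    by metis
  have lim: "(\<lambda>n. dist x (Y n)) \<longlonglongrightarrow> d"
  proof (rule tendsto_sandwich[OF _ _ tendsto_const])
    show "\<forall>\<^sub>F n in sequentially. d \<le> dist x (Y n)"
      using Y(1) by (intro always_eventually allI) (simp add: d_def infdist_le)
    show "\<forall>\<^sub>F n in sequentially. dist x (Y n) \<le> d + inverse (Suc n)"
      using Y(2) by (intro always_eventually allI less_imp_le)
    show "(\<lambda>n. d + inverse (Suc n)) \<longlonglongrightarrow> d"
      using tendsto_add[OF tendsto_const LIMSEQ_inverse_real_of_nat, of d] by simp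
  qed
  obtain p where p: "Y \<longlonglongrightarrow> p"
    using convex_minimizing_sequence_Cauchy[OF assms(2) Y(1) lim[unfolded d_def]]
    by (auto simp: convergent_eq_Cauchy[symmetric] convergent_def)
  have "dist x p = d"
    using LIMSEQ_unique[OF tendsto_dist[OF tendsto_const p] lim] .
  then show ?thesis
    using closed_sequentially[OF assms(1) _ p] Y(1) infdist_le[of _ S x]
    by (intro bexI[of _ p]) (auto simp: d_def)
qed

lemma closed_subspace_orthogonal_decomposition:
  fixes S :: "'a::{real_inner,complete_space} set"
  assumes "closed S" "subspace S"
  shows "\<exists>p\<in>S. \<forall>y\<in>S. inner (x - p) y = 0"
proof -
  have cvx: "convex S" using assms(2) by (rule subspace_imp_convex)
  obtain p where p: "p \<in> S" "\<forall>y\<in>S. dist x p \<le> dist x y"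
    using closed_convex_closest_point_exists[OF assms(1) cvx] assms(2) subspace_0 by blast
  have "inner (x - p) y = 0" if "y \<in> S" for y
  proof -
    have dot: "inner (x - p) (z - p) \<le> 0" if "z \<in> S" for z
      using any_closest_point_dot[OF cvx assms(1) p(1) that p(2)] .
    have "inner (x - p) y \<le> 0" using dot[of "p + y"] that p(1) assms(2) by (simp add: subspace_add)
    moreover have "inner (x - p) (- y) \<le> 0" using dot[of "p - y"] that p(1) assms(2) by (simp add: subspace_diff)
    ultimately show ?thesis by (simp add: inner_minus_right)
  qed
  with p show ?thesis by blast
qed

lemma orth_compl_decomposition:
  assumes "closed_csubspace M"
  obtains p q where "x = p + q" "p \<in> M" "q \<in> orth_compl M"
proof -
  have M: "closed M" "subspace M" "csubspace M"
    using assms csubspace_subspace by (auto simp: closed_csubspace_def)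
  obtain p where p: "p \<in> M" "\<And>y. y \<in> M \<Longrightarrow> inner (x - p) y = 0"
    using closed_subspace_orthogonal_decomposition[OF M(1,2)] by blast
  have "x - p \<in> orth_compl M"
    using p(2) csubspace_cscale[OF M(3)] by (auto simp: orth_compl_def cinner_eq_0_iff)
  with p(1) that[of p "x - p"] show ?thesis by simp
qed

lemma ccspan_orth_compl_Un: "closure (cspan (orth_compl U \<union> U)) = UNIV"
proof -
  have "x \<in> closure (cspan (orth_compl U \<union> U))" for x
  proof -
    obtain p q where pq: "x = p + q" "p \<in> closure (cspan U)" "q \<in> orth_compl (closure (cspan U))"
      using orth_compl_decomposition[OF closed_csubspace_ccspan] .
    have "p \<in> closure (cspan (orth_compl U \<union> U))" "q \<in> closure (cspan (orth_compl U \<union> U))"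
      using pq(2,3) ccspan_mono[of U "orth_compl U \<union> U"] ccspan_superset[of "orth_compl U \<union> U"]
      by (auto simp: orth_compl_ccspan_eq)
    then show ?thesis
      using pq(1) csubspace_add[OF csubspace_closure[OF cspan_csubspace]] by simp
  qed
  then show ?thesis by blast
qed

lemma riesz_representation:
  fixes l :: "'a::{real_inner,complete_space} \<Rightarrow> real"
  assumes "bounded_linear l"
  shows "\<exists>z. \<forall>x. l x = inner x z"
proof (cases "\<forall>x. l x = 0")
  case True
  then show ?thesis by (intro exI[of _ 0]) simp
next
  case False
  then obtain x0 where x0: "l x0 \<noteq> 0" by blast
  interpret l: bounded_linear l by (rule assms)
  define K where "K = {x. l x = 0}"
  have "closed K" unfolding K_def
    by (rule closed_Collect_eq) (auto intro: l.continuous_on continuous_on_id)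
  moreover have "subspace K" unfolding K_def subspace_def by (simp add: l.add l.scaleR)
  ultimately obtain p where p: "p \<in> K" "\<And>w. w \<in> K \<Longrightarrow> inner (x0 - p) w = 0"
    using closed_subspace_orthogonal_decomposition by blast
  define q where "q = x0 - p"
  have lq: "l q \<noteq> 0" using p(1) x0 by (simp add: q_def l.diff K_def)
  then have qq: "inner q q > 0" by auto
  show ?thesis
  proof (intro exI allI)
    fix x
    have "l (x - (l x / l q) *\<^sub>R q) = 0" using lq by (simp add: l.diff l.scaleR)
    then have "inner q (x - (l x / l q) *\<^sub>R q) = 0" using p(2) by (simp add: K_def q_def)
    then have "inner q x = (l x / l q) * inner q q" by (simp add: inner_diff_right)
    then show "l x = inner x ((l q / inner q q) *\<^sub>R q)"
      using qq lq by (simp add: inner_commute field_simps)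
  qed
qed

section \<open>Bounded complex-linear operators and adjoints\<close>

lemma clinear_opD:
  assumes "clinear_op T"
  shows "bounded_linear T" "T (cscale c x) = cscale c (T x)"
  using assms by (auto simp: clinear_op_def)

lemma clinear_op_simps:
  assumes "clinear_op T"
  shows "T (x + y) = T x + T y" "T (x - y) = T x - T y" "T (- x) = - T x" "T 0 = 0"
    "T (r *\<^sub>R x) = r *\<^sub>R T x" "T (cscale c x) = cscale c (T x)"
  using assms by (auto simp: clinear_op_def linear_simps bounded_linear.linear)

lemma clinear_op_comp: "clinear_op A \<Longrightarrow> clinear_op B \<Longrightarrow> clinear_op (A \<circ> B)"
  unfolding clinear_op_def comp_def by (auto intro: bounded_linear_compose)

lemma clinear_op_funpow: "clinear_op L \<Longrightarrow> clinear_op (L ^^ m)"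
proof (induction m)
  case 0
  then show ?case
    by (auto simp: clinear_op_def bounded_linear_ident[unfolded id_def[symmetric]])
qed (auto intro: clinear_op_comp)

lemma clinear_op_diff: "clinear_op A \<Longrightarrow> clinear_op B \<Longrightarrow> clinear_op (\<lambda>x. A x - B x)"
  unfolding clinear_op_def by (auto intro: bounded_linear_sub simp: cscale_diff_right)

lemma clinear_op_tendsto: "clinear_op T \<Longrightarrow> (f \<longlongrightarrow> l) F \<Longrightarrow> ((\<lambda>x. T (f x)) \<longlongrightarrow> T l) F"
  by (rule bounded_linear.tendsto[OF clinear_opD(1)])

lemma closed_csubspace_vimage:
  assumes L: "clinear_op L" and M: "closed_csubspace M"
  shows "closed_csubspace {x. L x \<in> M}"
proof -
  have "csubspace {x. L x \<in> M}"
    using M unfolding closed_csubspace_def csubspace_def by (simp add: clinear_op_simps[OF L])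
  moreover have "closed (L -` M)"
    using continuous_closed_vimage[of M L] M linear_continuous_at[OF clinear_opD(1)[OF L]]
    by (auto simp: closed_csubspace_def)
  ultimately show ?thesis by (simp add: closed_csubspace_def vimage_def)
qed

lemma closed_csubspace_ker: "clinear_op L \<Longrightarrow> closed_csubspace {x. L x = 0}"
  using closed_csubspace_vimage[of L "{0}"] by (simp add: closed_csubspace_def csubspace_def)

lemma clinear_op_image_ccspan_subset:
  assumes "clinear_op L" "closed_csubspace M" "L ` S \<subseteq> M"
  shows "L ` closure (cspan S) \<subseteq> M"
  using ccspan_minimal[OF closed_csubspace_vimage[OF assms(1,2)]] assms(3) by blast

lemma adjoint_exists:
  assumes T: "clinear_op T"
  shows "\<exists>S. \<forall>x y. cinner (T x) y = cinner x (S y)"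
proof -
  interpret T: bounded_linear T using T by (simp add: clinear_op_def)
  have "\<exists>z. \<forall>x. inner (T x) y = inner x z" for y
    by (rule riesz_representation, rule bounded_linear_compose[OF bounded_linear_inner_left])
      (rule T.bounded_linear_axioms)
  then obtain S where S: "\<And>x y. inner (T x) y = inner x (S y)" by metis
  have "inner (T x) (iscale y) = inner x (iscale (S y))" for x y
  proof -
    have "inner (T x) (iscale y) = - inner (T (iscale x)) y"
      by (simp add: inner_iscale_left clinear_opD(2)[OF T])
    also have "\<dots> = inner x (iscale (S y))" by (simp add: S inner_iscale_left)
    finally show ?thesis .
  qed
  then show ?thesis using S by (auto simp: cinner_def)
qed

lemma cinner_adj_right:
  assumes "clinear_op T"
  shows "cinner (T x) y = cinner x (adj T y)"
proof -
  have "\<exists>!S. \<forall>x y. cinner (T x) y = cinner x (S y)"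
    using adjoint_exists[OF assms] by (metis cinner_ext ext)
  then have "\<forall>x y. cinner (T x) y = cinner x (adj T y)"
    unfolding adj_def by (rule theI')
  then show ?thesis by blast
qed

lemma cinner_adj_left:
  assumes "clinear_op T"
  shows "cinner x (T y) = cinner (adj T x) y"
  by (metis cinner_adj_right assms cinner_commute)

lemma inner_adj_right:
  assumes "clinear_op T"
  shows "inner (T x) y = inner x (adj T y)"
  by (metis Re_cinner cinner_adj_right assms)

lemma inner_adj_left:
  assumes "clinear_op T"
  shows "inner x (T y) = inner (adj T x) y"
  by (metis inner_adj_right assms inner_commute)

lemma adj_eqI:
  assumes "clinear_op T" "\<And>x y. cinner (T x) y = cinner x (S y)"
  shows "adj T = S"
  using assms cinner_adj_right by (metis cinner_ext ext)

lemma clinear_op_adj: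
  assumes T: "clinear_op T"
  shows "clinear_op (adj T)"
proof -
  let ?S = "adj T"
  have add: "?S (a + b) = ?S a + ?S b" for a b
    by (rule cinner_ext) (simp add: cinner_adj_right[OF T, symmetric] cinner_add_right)
  have cs: "?S (cscale c a) = cscale c (?S a)" for c a
    by (rule cinner_ext) (simp add: cinner_adj_right[OF T, symmetric] cinner_cscale_right)
  obtain K where K: "K > 0" "\<And>x. norm (T x) \<le> norm x * K"
    using bounded_linear.pos_bounded[OF clinear_opD(1)[OF T]] by blast
  have bd: "norm (?S y) \<le> norm y * K" for y
  proof -
    have "(norm (?S y))\<^sup>2 = inner (T (?S y)) y" by (simp add: inner_adj_right[OF T] power2_norm_eq_inner)
    also have "\<dots> \<le> norm (T (?S y)) * norm y" by (rule norm_cauchy_schwarz)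
    also have "\<dots> \<le> norm (?S y) * K * norm y" using K by (simp add: mult_right_mono)
    finally have "norm (?S y) * norm (?S y) \<le> norm (?S y) * (norm y * K)"
      by (simp add: power2_eq_square mult_ac)
    then show ?thesis
      by (cases "?S y = 0") (use K in \<open>auto simp: mult_le_cancel_left\<close>)
  qed
  have "bounded_linear ?S"
    by (rule bounded_linear_intro[where K=K])
      (auto simp: add cs bd cscale_of_real[symmetric] simp del: cscale_of_real)
  then show ?thesis using cs by (simp add: clinear_op_def)
qed

lemma adj_adj: "clinear_op T \<Longrightarrow> adj (adj T) = T"
  by (rule adj_eqI) (auto simp: clinear_op_adj cinner_adj_left)

lemma inner_adj_apply_left: "clinear_op N \<Longrightarrow> inner (adj N x) y = inner x (N y)"
  using inner_adj_right[OF clinear_op_adj, of N x y] adj_adj[of N] by simp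

lemma adj_comp:
  assumes "clinear_op A" "clinear_op B"
  shows "adj (A \<circ> B) = adj B \<circ> adj A"
  by (rule adj_eqI) (auto simp: assms clinear_op_comp cinner_adj_right)

lemma isometry_inner:
  assumes "is_isometry V"
  shows "inner (V x) (V y) = inner x y"
proof -
  have V: "clinear_op V" "\<And>x. norm (V x) = norm x" using assms by (auto simp: is_isometry_def)
  have "(norm (V x + V y))\<^sup>2 = (norm (x + y))\<^sup>2"
    using V by (metis clinear_op_simps(1))
  then have "inner (V x) (V x) + 2 * inner (V x) (V y) + inner (V y) (V y)
      = inner x x + 2 * inner x y + inner y y"
    by (simp add: power2_norm_eq_inner inner_add_left inner_add_right inner_commute)
  moreover have "inner (V x) (V x) = inner x x" "inner (V y) (V y) = inner y y"
    using V(2) by (metis power2_norm_eq_inner)+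
  ultimately show ?thesis by simp
qed

lemma isometry_cinner:
  assumes "is_isometry V"
  shows "cinner (V x) (V y) = cinner x y"
  using isometry_inner[OF assms, of x "iscale y"] isometry_inner[OF assms, of x y]
    clinear_opD(2)[of V] assms
  by (simp add: cinner_def is_isometry_def)

lemma adj_isometry_apply [simp]:
  assumes "is_isometry V"
  shows "adj V (V x) = x"
  using assms by (intro cinner_ext) (metis cinner_adj_right isometry_cinner is_isometry_def)

lemma norm_adj_isometry_le:
  assumes "is_isometry V"
  shows "norm (adj V x) \<le> norm x"
proof -
  have cl: "clinear_op V" using assms by (simp add: is_isometry_def)
  have "(norm (adj V x))\<^sup>2 = inner (V (adj V x)) x"
    by (simp add: inner_adj_right[OF cl] power2_norm_eq_inner)
  also have "\<dots> \<le> norm (V (adj V x)) * norm x" by (rule norm_cauchy_schwarz)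
  also have "\<dots> = norm (adj V x) * norm x" using assms by (simp add: is_isometry_def)
  finally have "norm (adj V x) * norm (adj V x) \<le> norm (adj V x) * norm x"
    by (simp add: power2_eq_square)
  then show ?thesis by (cases "adj V x = 0") (auto simp: mult_le_cancel_left)
qed

lemma reducing_orth_compl:
  assumes "clinear_op V1" "clinear_op V2"
    and "V1 ` U \<subseteq> U" "V2 ` U \<subseteq> U" "adj V1 ` U \<subseteq> U" "adj V2 ` U \<subseteq> U"
  shows "reducing V1 V2 (orth_compl U)"
  using assms orth_compl_closed_csubspace[of U]
  unfolding reducing_def orth_compl_def
  by (auto simp: cinner_adj_right cinner_adj_left[symmetric] image_subset_iff)

lemma gen_subspace_self: "f \<in> gen_subspace V1 V2 f"
  unfolding gen_subspace_def using ccspan_superset by (fastforce intro: exI[of _ 0])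

lemma gen_subspace_subset:
  assumes "closed_csubspace S" "f \<in> S" "V1 ` S \<subseteq> S" "V2 ` S \<subseteq> S"
  shows "gen_subspace V1 V2 f \<subseteq> S"
proof -
  have "(V2 ^^ n) f \<in> S" for n by (induction n) (use assms in auto)
  then have "(V1 ^^ m) ((V2 ^^ n) f) \<in> S" for m n by (induction m) (use assms in auto)
  then show ?thesis unfolding gen_subspace_def by (intro ccspan_minimal[OF assms(1)]) auto
qed

section \<open>Eigenvectors of compact normal operators\<close>

lemma eigenvector_of_square:
  fixes A :: "'a::real_vector \<Rightarrow> 'a"
  assumes A: "linear A" and X: "subspace X" "\<And>x. x \<in> X \<Longrightarrow> A x \<in> X"
    and z: "z \<in> X" "z \<noteq> 0" "A (A z) = s\<^sup>2 *\<^sub>R z"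
  shows "\<exists>e\<in>X. e \<noteq> 0 \<and> (\<exists>c. A e = c *\<^sub>R e)"
proof (cases "A z + s *\<^sub>R z = 0")
  case True
  then have "A z = (- s) *\<^sub>R z" by (simp add: eq_neg_iff_add_eq_0)
  with z show ?thesis by blast
next
  case False
  have "A (A z + s *\<^sub>R z) = s *\<^sub>R (A z + s *\<^sub>R z)"
    using z(3) by (simp add: linear_add[OF A] linear_scale[OF A] power2_eq_square algebra_simps)
  moreover have "A z + s *\<^sub>R z \<in> X" using X z by (simp add: subspace_add subspace_scale)
  ultimately show ?thesis using False by blast
qed

lemma symmetric_op_norming_sequence:
  fixes A :: "'a::real_inner \<Rightarrow> 'a"
  assumes sym: "\<And>x y. inner (A x) y = inner x (A y)"
    and bound: "\<And>n. norm (A (A (xs n))) \<le> s * norm (A (xs n))" and xs: "\<And>n. norm (xs n) \<le> 1"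
    and lim: "(\<lambda>n. norm (A (xs n))) \<longlonglongrightarrow> s"
  shows "(\<lambda>n. A (A (xs n)) - s\<^sup>2 *\<^sub>R xs n) \<longlonglongrightarrow> 0"
proof -
  have defect: "(norm (A (A (xs n)) - s\<^sup>2 *\<^sub>R xs n))\<^sup>2 \<le> s\<^sup>2 * (s\<^sup>2 - (norm (A (xs n)))\<^sup>2)" for n
  proof -
    have "(norm (A (A (xs n))))\<^sup>2 \<le> s\<^sup>2 * (norm (A (xs n)))\<^sup>2"
      using bound[of n] by (metis norm_ge_zero power_mono power_mult_distrib)
    moreover have "s\<^sup>2 * s\<^sup>2 * (norm (xs n))\<^sup>2 \<le> s\<^sup>2 * s\<^sup>2"
      using xs[of n] by (simp add: mult_left_le power_le_one)
    moreover have "inner (A (A (xs n))) (xs n) = (norm (A (xs n)))\<^sup>2"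
      by (simp add: sym power2_norm_eq_inner)
    moreover have "(norm (A (A (xs n)) - s\<^sup>2 *\<^sub>R xs n))\<^sup>2
        = (norm (A (A (xs n))))\<^sup>2 - 2 * s\<^sup>2 * inner (A (A (xs n))) (xs n) + s\<^sup>2 * s\<^sup>2 * (norm (xs n))\<^sup>2"
      unfolding power2_norm_eq_inner
      by (simp add: inner_diff_left inner_diff_right inner_commute algebra_simps power2_eq_square)
    ultimately show ?thesis by (simp add: algebra_simps)
  qed
  have "(\<lambda>n. s\<^sup>2 * (s\<^sup>2 - (norm (A (xs n)))\<^sup>2)) \<longlonglongrightarrow> s\<^sup>2 * (s\<^sup>2 - s\<^sup>2)"
    using lim by (intro tendsto_intros)
  then have bound_lim: "(\<lambda>n. s\<^sup>2 * (s\<^sup>2 - (norm (A (xs n)))\<^sup>2)) \<longlonglongrightarrow> 0" by simp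
  have "(\<lambda>n. (norm (A (A (xs n)) - s\<^sup>2 *\<^sub>R xs n))\<^sup>2) \<longlonglongrightarrow> 0"
    by (rule tendsto_sandwich[OF _ _ tendsto_const bound_lim]) (use defect in \<open>auto intro!: always_eventually\<close>)
  then have "(\<lambda>n. norm (A (A (xs n)) - s\<^sup>2 *\<^sub>R xs n)) \<longlonglongrightarrow> 0"
    using tendsto_real_sqrt by fastforce
  then show ?thesis by (simp add: tendsto_norm_zero_iff)
qed

lemma bounded_linear_norming_sequence:
  fixes A :: "'a::real_normed_vector \<Rightarrow> 'b::real_normed_vector"
  assumes A: "bounded_linear A" and X: "subspace X"
  obtains s xs where "\<And>y. y \<in> X \<Longrightarrow> norm (A y) \<le> s * norm y"
    "\<And>n. xs n \<in> X" "\<And>n. norm (xs n) \<le> 1" "(\<lambda>n. norm (A (xs n))) \<longlonglongrightarrow> s"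
proof -
  interpret A: bounded_linear A by (rule A)
  obtain K where K: "\<And>x. norm (A x) \<le> norm x * K" "K > 0" using A.pos_bounded by blast
  define N where "N = (\<lambda>x. norm (A x)) ` {x\<in>X. norm x \<le> 1}"
  have "norm (A x) \<le> K" if "norm x \<le> 1" for x
  proof -
    have "norm x * K \<le> K" using K(2) that by (simp add: mult_left_le_one_le)
    then show ?thesis using K(1)[of x] by linarith
  qed
  then have bdd: "bdd_above N" unfolding N_def by (auto intro: bdd_aboveI2[where M=K])
  have "0 \<in> {x\<in>X. norm x \<le> 1}" using X by (simp add: subspace_0)
  then have N: "N \<noteq> {}" by (auto simp: N_def)
  define s where "s = Sup N"
  have s_ge: "norm (A x) \<le> s" if "x \<in> X" "norm x \<le> 1" for x
    unfolding s_def N_def using that bdd by (auto simp: N_def intro: cSup_upper)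
  have bound: "norm (A y) \<le> s * norm y" if "y \<in> X" for y
  proof (cases "y = 0")
    case False
    have "norm (A ((1 / norm y) *\<^sub>R y)) \<le> s"
      using that False X by (intro s_ge) (auto simp: subspace_scale)
    then show ?thesis using False by (simp add: A.scaleR divide_le_eq mult.commute)
  qed simp
  have "\<exists>x. (x \<in> X \<and> norm x \<le> 1) \<and> s - inverse (Suc n) < norm (A x)" for n
  proof -
    have "s - inverse (Suc n) < Sup N" by (simp add: s_def)
    then show ?thesis using less_cSup_iff[OF N bdd] by (auto simp: N_def)
  qed
  then obtain xs where xs: "\<And>n. xs n \<in> X" "\<And>n. norm (xs n) \<le> 1"
    "\<And>n. s - inverse (Suc n) < norm (A (xs n))" by metis
  have "(\<lambda>n. norm (A (xs n))) \<longlonglongrightarrow> s"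
  proof (rule tendsto_sandwich[OF _ _ _ tendsto_const])
    show "\<forall>\<^sub>F n in sequentially. s - inverse (Suc n) \<le> norm (A (xs n))"
      using xs(3) by (intro always_eventually allI less_imp_le)
    show "\<forall>\<^sub>F n in sequentially. norm (A (xs n)) \<le> s"
      using xs(1,2) s_ge by (intro always_eventually allI) auto
    show "(\<lambda>n. s - inverse (Suc n)) \<longlonglongrightarrow> s"
      using tendsto_diff[OF tendsto_const LIMSEQ_inverse_real_of_nat, of s] by simp
  qed
  with bound xs that show ?thesis by blast
qed

lemma compact_symmetric_op_eigenvector:
  fixes A :: "'a::{real_inner,complete_space} \<Rightarrow> 'a"
  assumes A: "bounded_linear A"
    and sym: "\<And>x y. inner (A x) y = inner x (A y)"
    and cpt: "\<And>x. (\<forall>n::nat. norm (x n) \<le> 1) \<Longrightarrow> \<exists>r l. strict_mono r \<and> (\<lambda>n. A (x (r n))) \<longlonglongrightarrow> l"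
    and X: "closed X" "subspace X" "\<And>x. x \<in> X \<Longrightarrow> A x \<in> X"
    and x0: "x0 \<in> X" "x0 \<noteq> 0"
  shows "\<exists>e\<in>X. e \<noteq> 0 \<and> (\<exists>c. A e = c *\<^sub>R e)"
proof -
  interpret A: bounded_linear A by (rule A)
  obtain s xs where bound: "\<And>y. y \<in> X \<Longrightarrow> norm (A y) \<le> s * norm y"
    and xs: "\<And>n. xs n \<in> X" "\<And>n. norm (xs n) \<le> 1" and lim: "(\<lambda>n. norm (A (xs n))) \<longlonglongrightarrow> s"
    using bounded_linear_norming_sequence[OF A X(2)] by blast
  show ?thesis
  proof (cases "s > 0")
    case False
    then have "s * norm x0 \<le> 0" by (simp add: mult_nonpos_nonneg)
    then have "norm (A x0) \<le> 0" using bound[OF x0(1)] by linarith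
    then have "A x0 = 0" by simp
    with x0 show ?thesis by (intro bexI[of _ x0]) auto
  next
    case True
    txt \<open>Compactness turns the approximate eigenvectors of \<open>A\<^sup>2\<close> into an eigenvector.\<close>
    have D0: "(\<lambda>n. A (A (xs n)) - s\<^sup>2 *\<^sub>R xs n) \<longlonglongrightarrow> 0"
      using symmetric_op_norming_sequence[OF sym bound[OF X(3)[OF xs(1)]] xs(2) lim] .
    obtain r y where r: "strict_mono r" "(\<lambda>n. A (xs (r n))) \<longlonglongrightarrow> y"
      using cpt[of xs] xs(2) by blast
    define z where "z = (1 / s\<^sup>2) *\<^sub>R A y"
    have "(\<lambda>n. A (A (xs (r n))) - (A (A (xs (r n))) - s\<^sup>2 *\<^sub>R xs (r n))) \<longlonglongrightarrow> A y - 0"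
      using A.tendsto[OF r(2)] LIMSEQ_subseq_LIMSEQ[OF D0 r(1), unfolded o_def] by (rule tendsto_diff)
    then have "(\<lambda>n. (1 / s\<^sup>2) *\<^sub>R (s\<^sup>2 *\<^sub>R xs (r n))) \<longlonglongrightarrow> z"
      unfolding z_def by (intro tendsto_scaleR tendsto_const) simp
    then have zlim: "(\<lambda>n. xs (r n)) \<longlonglongrightarrow> z" using True by simp
    have zX: "z \<in> X" using closed_sequentially[OF X(1) _ zlim] xs(1) by blast
    have Az: "A z = y" using LIMSEQ_unique[OF A.tendsto[OF zlim] r(2)] .
    have "norm y = s"
      using LIMSEQ_unique[OF tendsto_norm[OF r(2)] LIMSEQ_subseq_LIMSEQ[OF lim r(1), unfolded o_def]] .
    then have "z \<noteq> 0" using Az True A.zero by auto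
    moreover have "A (A z) = s\<^sup>2 *\<^sub>R z" using Az True by (simp add: z_def)
    ultimately show ?thesis using eigenvector_of_square[OF A.linear X(2,3) zX] by blast
  qed
qed

lemma normal_op_norm_adj:
  assumes "normal_op N"
  shows "norm (adj N x) = norm (N x)"
proof -
  have N: "clinear_op N" using assms by (simp add: normal_op_def)
  have "(norm (N x))\<^sup>2 = inner x (adj N (N x))"
    by (simp add: inner_adj_right[OF N] power2_norm_eq_inner)
  also have "\<dots> = inner x (N (adj N x))"
    using assms by (metis normal_op_def comp_apply)
  also have "\<dots> = (norm (adj N x))\<^sup>2"
    by (simp add: inner_adj_left[OF N] power2_norm_eq_inner)
  finally show ?thesis by (simp add: power2_eq_iff_nonneg)
qed

lemma normal_op_eigenvector_adj:
  assumes "normal_op N" "N f = cscale \<mu> f"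
  shows "adj N f = cscale (cnj \<mu>) f"
proof -
  have N: "clinear_op N" using assms by (simp add: normal_op_def)
  have "cinner (adj N f) (adj N f) = cinner (N f) (N f)"
    using normal_op_norm_adj[OF assms(1)] by (simp add: cinner_self)
  moreover have "cinner (adj N f) f = cnj \<mu> * cinner f f"
    by (simp add: cinner_adj_left[OF N, symmetric] assms cinner_cscale_right)
  moreover have "cinner f (adj N f) = \<mu> * cinner f f"
    by (simp add: cinner_adj_right[OF N, symmetric] assms cinner_cscale_left)
  ultimately have "cinner (adj N f - cscale (cnj \<mu>) f) (adj N f - cscale (cnj \<mu>) f) = 0"
    by (simp add: cinner_diff_left cinner_diff_right cinner_cscale_left cinner_cscale_right
        assms(2) algebra_simps)
  then show ?thesis by simp
qed

definition re_part :: "('a::chilbert_space \<Rightarrow> 'a) \<Rightarrow> 'a \<Rightarrow> 'a" where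
  "re_part N x = (1/2) *\<^sub>R (N x + adj N x)"

definition im_part :: "('a::chilbert_space \<Rightarrow> 'a) \<Rightarrow> 'a \<Rightarrow> 'a" where
  "im_part N x = (1/2) *\<^sub>R iscale (adj N x - N x)"

lemma re_part_im_part: "N x = re_part N x + iscale (im_part N x)"
proof -
  have "re_part N x + iscale (im_part N x) = (1/2) *\<^sub>R (N x + adj N x) + (1/2) *\<^sub>R (N x - adj N x)"
    by (simp add: re_part_def im_part_def cscale_scaleR_right cscale_diff_right)
  also have "\<dots> = (1/2) *\<^sub>R ((N x + adj N x) + (N x - adj N x))"
    by (simp only: scaleR_add_right)
  also have "(N x + adj N x) + (N x - adj N x) = 2 *\<^sub>R N x"
    by (simp add: scaleR_2)
  finally show ?thesis by simp
qed

lemma bounded_linear_re_part: "clinear_op N \<Longrightarrow> bounded_linear (re_part N)"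
  unfolding re_part_def
  by (intro bounded_linear_compose[OF bounded_linear_scaleR_right] bounded_linear_add
      clinear_opD(1) clinear_op_adj)

lemma bounded_linear_im_part: "clinear_op N \<Longrightarrow> bounded_linear (im_part N)"
  unfolding im_part_def
  by (intro bounded_linear_compose[OF bounded_linear_scaleR_right]
      bounded_linear_compose[OF bounded_linear_cscale] bounded_linear_sub clinear_opD(1) clinear_op_adj)

lemma re_part_symmetric: "clinear_op N \<Longrightarrow> inner (re_part N x) y = inner x (re_part N y)"
  by (simp add: re_part_def inner_add_left inner_add_right inner_adj_right inner_adj_apply_left)

lemma im_part_symmetric:
  assumes N: "clinear_op N"
  shows "inner (im_part N x) y = inner x (im_part N y)"
proof -
  have "inner (im_part N x) y = - (1/2) * inner (adj N x - N x) (iscale y)"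
    by (simp add: im_part_def inner_iscale_left)
  also have "\<dots> = - (1/2) * (inner x (N (iscale y)) - inner x (adj N (iscale y)))"
    by (simp add: inner_diff_left inner_adj_apply_left[OF N] inner_adj_right[OF N])
  also have "\<dots> = (1/2) * inner x (iscale (adj N y - N y))"
    by (simp add: clinear_opD(2)[OF N] clinear_opD(2)[OF clinear_op_adj[OF N]]
        cscale_diff_right inner_diff_right algebra_simps)
  also have "\<dots> = inner x (im_part N y)" by (simp add: im_part_def)
  finally show ?thesis .
qed

lemma re_part_im_part_commute:
  assumes "normal_op N"
  shows "re_part N (im_part N x) = im_part N (re_part N x)"
proof -
  have N: "clinear_op N" "clinear_op (adj N)"
    using assms clinear_op_adj by (auto simp: normal_op_def)
  have NN: "N (adj N x) = adj N (N x)" using assms by (metis normal_op_def comp_apply)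
  have "re_part N (im_part N x) = (1/4) *\<^sub>R iscale (adj N (adj N x) - N (N x))"
    by (simp add: re_part_def im_part_def clinear_op_simps[OF N(1)] clinear_op_simps[OF N(2)]
        NN cscale_diff_right cscale_add_right cscale_scaleR_right algebra_simps)
  moreover have "im_part N (re_part N x) = (1/4) *\<^sub>R iscale (adj N (adj N x) - N (N x))"
    by (simp add: re_part_def im_part_def clinear_op_simps[OF N(1)] clinear_op_simps[OF N(2)]
        NN cscale_diff_right cscale_add_right cscale_scaleR_right algebra_simps)
  ultimately show ?thesis by simp
qed

lemma compact_op_convergent_subseq:
  fixes x :: "nat \<Rightarrow> 'a::chilbert_space"
  assumes "compact_op N" "\<forall>n. norm (x n) \<le> 1"
  obtains r where "strict_mono r" "convergent (\<lambda>n. N (x (r n)))"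
proof -
  have N: "clinear_op N" "compact (closure (N ` ball 0 1))"
    using assms(1) by (auto simp: compact_op_def)
  define y where "y n = N ((1/2) *\<^sub>R x n)" for n
  have "(1/2) *\<^sub>R x n \<in> ball 0 1" for n
    using assms(2)[rule_format, of n] by simp
  then have "\<forall>n. y n \<in> closure (N ` ball 0 1)"
    unfolding y_def using closure_subset by blast
  then obtain l r where r: "strict_mono r" "(y \<circ> r) \<longlonglongrightarrow> l"
    using seq_compactE[OF compact_imp_seq_compact[OF N(2)]] by metis
  have "(\<lambda>n. 2 *\<^sub>R y (r n)) \<longlonglongrightarrow> 2 *\<^sub>R l"
    using r(2) by (intro tendsto_intros) (simp add: o_def)
  then have "convergent (\<lambda>n. N (x (r n)))"
    by (auto simp: convergent_def y_def clinear_op_simps(5)[OF N(1)])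
  with r(1) that show ?thesis by blast
qed

lemma compact_normal_op_convergent_subseq:
  fixes x :: "nat \<Rightarrow> 'a::chilbert_space"
  assumes "compact_op N" "normal_op N" "\<forall>n. norm (x n) \<le> 1"
  obtains r a b where "strict_mono r" "(\<lambda>n. N (x (r n))) \<longlonglongrightarrow> a" "(\<lambda>n. adj N (x (r n))) \<longlonglongrightarrow> b"
proof -
  have N: "clinear_op N" "clinear_op (adj N)"
    using assms(1) clinear_op_adj by (auto simp: compact_op_def)
  obtain r where r: "strict_mono r" "convergent (\<lambda>n. N (x (r n)))"
    using compact_op_convergent_subseq[OF assms(1,3)] .
  have "dist (adj N (x (r m))) (adj N (x (r n))) = dist (N (x (r m))) (N (x (r n)))" for m n
    using normal_op_norm_adj[OF assms(2), of "x (r m) - x (r n)"]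
    by (simp add: dist_norm clinear_op_simps(2)[OF N(1)] clinear_op_simps(2)[OF N(2)])
  then have "Cauchy (\<lambda>n. adj N (x (r n)))"
    using convergent_Cauchy[OF r(2)] by (simp add: Cauchy_def)
  with r that show ?thesis by (auto simp: convergent_def Cauchy_convergent_iff)
qed

lemma compact_normal_op_re_im_convergent_subseq:
  fixes x :: "nat \<Rightarrow> 'a::chilbert_space"
  assumes "compact_op N" "normal_op N" "\<forall>n. norm (x n) \<le> 1"
  shows "\<exists>r l. strict_mono r \<and> (\<lambda>n. re_part N (x (r n))) \<longlonglongrightarrow> l"
    and "\<exists>r l. strict_mono r \<and> (\<lambda>n. im_part N (x (r n))) \<longlonglongrightarrow> l"
proof -
  obtain r a b where r: "strict_mono r" "(\<lambda>n. N (x (r n))) \<longlonglongrightarrow> a" "(\<lambda>n. adj N (x (r n))) \<longlonglongrightarrow> b"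
    using compact_normal_op_convergent_subseq[OF assms] .
  have "(\<lambda>n. re_part N (x (r n))) \<longlonglongrightarrow> (1/2) *\<^sub>R (a + b)"
    unfolding re_part_def using r by (intro tendsto_intros)
  moreover have "(\<lambda>n. im_part N (x (r n))) \<longlonglongrightarrow> (1/2) *\<^sub>R iscale (b - a)"
    unfolding im_part_def using r by (intro tendsto_intros)
  ultimately show "\<exists>r l. strict_mono r \<and> (\<lambda>n. re_part N (x (r n))) \<longlonglongrightarrow> l"
    "\<exists>r l. strict_mono r \<and> (\<lambda>n. im_part N (x (r n))) \<longlonglongrightarrow> l"
    using r(1) by blast+
qed

lemma compact_normal_op_eigenvector:
  assumes N: "compact_op N" "normal_op N"
    and X: "closed_csubspace X" "N ` X \<subseteq> X" "adj N ` X \<subseteq> X"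
    and x0: "x0 \<in> X" "x0 \<noteq> 0"
  shows "\<exists>e\<in>X. norm e = 1 \<and> (\<exists>\<mu>. N e = cscale \<mu> e)"
proof -
  have cl: "clinear_op N" using N(2) by (simp add: normal_op_def)
  interpret A: bounded_linear "re_part N" by (rule bounded_linear_re_part[OF cl])
  interpret B: bounded_linear "im_part N" by (rule bounded_linear_im_part[OF cl])
  have X': "closed X" "subspace X" "csubspace X"
    using X(1) csubspace_subspace by (auto simp: closed_csubspace_def)
  have invA: "re_part N x \<in> X" if "x \<in> X" for x
    using X that unfolding re_part_def by (auto intro!: csubspace_scaleR[OF X'(3)] csubspace_add[OF X'(3)])
  have invB: "im_part N x \<in> X" if "x \<in> X" for x
    using X that unfolding im_part_def
    by (auto intro!: csubspace_scaleR[OF X'(3)] csubspace_cscale[OF X'(3)] csubspace_diff[OF X'(3)])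
  txt \<open>An eigenvector of \<open>N\<close> is a common eigenvector of its commuting symmetric parts.\<close>
  obtain e1 a where e1: "e1 \<in> X" "e1 \<noteq> 0" "re_part N e1 = a *\<^sub>R e1"
    using compact_symmetric_op_eigenvector[OF A.bounded_linear_axioms re_part_symmetric[OF cl]
        compact_normal_op_re_im_convergent_subseq(1)[OF N] X'(1,2) invA x0] by blast
  define Y where "Y = X \<inter> {x. re_part N x = a *\<^sub>R x}"
  have "closed Y" unfolding Y_def
    by (intro closed_Int X'(1) closed_Collect_eq) (auto intro: A.continuous_on continuous_intros)
  moreover have "subspace Y"
    using X'(2) by (auto simp: Y_def subspace_def A.add A.scaleR algebra_simps)
  moreover have "im_part N x \<in> Y" if "x \<in> Y" for x
    using that invB re_part_im_part_commute[OF N(2)] by (simp add: Y_def B.scaleR)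
  ultimately obtain e b where e: "e \<in> Y" "e \<noteq> 0" "im_part N e = b *\<^sub>R e"
    using compact_symmetric_op_eigenvector[OF B.bounded_linear_axioms im_part_symmetric[OF cl]
        compact_normal_op_re_im_convergent_subseq(2)[OF N], of Y e1] e1 by (auto simp: Y_def)
  have "N e = cscale (Complex a b) e"
    using e by (subst re_part_im_part) (simp add: Y_def cscale_Complex cscale_scaleR_right)
  then have "N ((1 / norm e) *\<^sub>R e) = cscale (Complex a b) ((1 / norm e) *\<^sub>R e)"
    by (simp add: clinear_op_simps(5)[OF cl] cscale_scaleR_right)
  moreover have "(1 / norm e) *\<^sub>R e \<in> X" using e(1) X'(3) by (simp add: Y_def csubspace_scaleR)
  ultimately show ?thesis using e(2) by (intro bexI[of _ "(1 / norm e) *\<^sub>R e"]) auto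
qed

lemma normal_op_orth_compl_eigenvectors_invariant:
  assumes "normal_op N" "\<forall>f\<in>F. \<exists>\<mu>. N f = cscale \<mu> f"
  shows "N ` orth_compl F \<subseteq> orth_compl F" "adj N ` orth_compl F \<subseteq> orth_compl F"
proof -
  have N: "clinear_op N" using assms(1) by (simp add: normal_op_def)
  have "cinner (N y) f = 0" "cinner (adj N y) f = 0" if "y \<in> orth_compl F" "f \<in> F" for y f
  proof -
    obtain \<mu> where \<mu>: "N f = cscale \<mu> f" using assms(2) \<open>f \<in> F\<close> by blast
    have "cinner y f = 0" using that by (simp add: orth_compl_def)
    then show "cinner (N y) f = 0" "cinner (adj N y) f = 0"
      by (simp_all add: cinner_adj_right[OF N] cinner_adj_left[OF N, symmetric] \<mu>
          normal_op_eigenvector_adj[OF assms(1) \<mu>] cinner_cscale_right)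
  qed
  then show "N ` orth_compl F \<subseteq> orth_compl F" "adj N ` orth_compl F \<subseteq> orth_compl F"
    by (auto simp: orth_compl_def)
qed

lemma compact_normal_op_eigenbasis:
  assumes N: "compact_op N" "normal_op N"
    and E: "closed_csubspace E" "N ` E \<subseteq> E" "adj N ` E \<subseteq> E"
  shows "\<exists>F. orthonormal_basis_of F E \<and> (\<forall>f\<in>F. \<exists>\<mu>. N f = cscale \<mu> f)"
proof -
  define Fam where "Fam = {F. F \<subseteq> E \<and> (\<forall>f\<in>F. norm f = 1) \<and> pairwise (\<lambda>f g. cinner f g = 0) F
    \<and> (\<forall>f\<in>F. \<exists>\<mu>. N f = cscale \<mu> f)}"
  have "\<Union>C \<in> Fam" if "C \<in> chains Fam" for C
    using that pairwise_chain_Union[of C "\<lambda>f g. cinner f g = 0"]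
    unfolding Fam_def chains_def by blast
  then obtain F where F: "F \<in> Fam" and max: "\<And>G. G \<in> Fam \<Longrightarrow> F \<subseteq> G \<Longrightarrow> G = F"
    using Zorn_Lemma[of Fam] by blast
  have FE: "closure (cspan F) \<subseteq> E"
    using F E(1) by (intro ccspan_minimal) (auto simp: Fam_def)
  have "E \<subseteq> closure (cspan F)"
  proof
    fix x assume "x \<in> E"
    obtain p q where pq: "x = p + q" "p \<in> closure (cspan F)" "q \<in> orth_compl (closure (cspan F))"
      using orth_compl_decomposition[OF closed_csubspace_ccspan] .
    have qX: "q \<in> E \<inter> orth_compl F"
      using pq \<open>x \<in> E\<close> FE E(1) csubspace_diff[of E x p]
      by (auto simp: closed_csubspace_def orth_compl_ccspan_eq)
    have "q = 0"
    proof (rule ccontr)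
      assume "q \<noteq> 0"
      have "closed_csubspace (E \<inter> orth_compl F)"
        by (rule closed_csubspace_Int[OF E(1) orth_compl_closed_csubspace])
      moreover have "N ` (E \<inter> orth_compl F) \<subseteq> E \<inter> orth_compl F"
        "adj N ` (E \<inter> orth_compl F) \<subseteq> E \<inter> orth_compl F"
        using E normal_op_orth_compl_eigenvectors_invariant[OF N(2), of F] F by (auto simp: Fam_def)
      ultimately obtain e \<mu> where e: "e \<in> E" "e \<in> orth_compl F" "norm e = 1" "N e = cscale \<mu> e"
        using compact_normal_op_eigenvector[OF N _ _ _ qX \<open>q \<noteq> 0\<close>] by blast
      have "insert e F \<in> Fam"
        using F e by (auto simp: Fam_def pairwise_insert orth_compl_def cinner_eq_0_commute)
      then have "e \<in> F" using max by blast
      then show False using e(2,3) orth_compl_self by fastforce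
    qed
    then show "x \<in> closure (cspan F)" using pq by simp
  qed
  with FE F show ?thesis
    by (auto simp: orthonormal_basis_of_def Fam_def pairwise_def)
qed

section \<open>The unitary part of an isometry\<close>

locale isometry =
  fixes V :: "'a::chilbert_space \<Rightarrow> 'a"
  assumes is_isometry: "is_isometry V"
begin

lemma clinear: "clinear_op V"
  using is_isometry by (simp add: is_isometry_def)

lemma clinear_adj: "clinear_op (adj V)"
  using clinear_op_adj[OF clinear] .

lemma norm_funpow [simp]: "norm ((V ^^ m) x) = norm x"
  by (induction m) (use is_isometry in \<open>auto simp: is_isometry_def\<close>)

lemma adj_funpow_funpow [simp]: "(adj V ^^ m) ((V ^^ m) x) = x"
  by (induction m arbitrary: x) (auto simp: funpow_swap1 is_isometry)

lemma cinner_funpow_adj: "cinner ((V ^^ m) u) y = cinner u ((adj V ^^ m) y)"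
proof (induction m arbitrary: u y)
  case (Suc m)
  then show ?case by (simp add: cinner_adj_right[OF clinear] funpow_swap1)
qed simp

lemma norm_adj_funpow_Suc_le: "norm ((adj V ^^ Suc n) x) \<le> norm ((adj V ^^ n) x)"
  using norm_adj_isometry_le[OF is_isometry] by simp

text \<open>\<open>pow_range_proj m\<close> is the orthogonal projection onto the range of \<open>V ^^ m\<close>. These projections
  decrease, and their strong limit \<open>unitary_proj\<close> projects onto the unitary part of the Wold
  decomposition of \<open>V\<close>.\<close>

definition pow_range_proj :: "nat \<Rightarrow> 'a \<Rightarrow> 'a" where
  "pow_range_proj m x = (V ^^ m) ((adj V ^^ m) x)"

lemma clinear_pow_range_proj: "clinear_op (pow_range_proj m)"
proof -
  have "pow_range_proj m = (V ^^ m) \<circ> (adj V ^^ m)" by (auto simp: pow_range_proj_def)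
  then show ?thesis using clinear_op_comp clinear_op_funpow clinear clinear_adj by metis
qed

lemma cinner_pow_range_proj: "cinner (pow_range_proj m x) y = cinner x (pow_range_proj m y)"
  by (simp add: pow_range_proj_def cinner_funpow_adj) (metis cinner_commute cinner_funpow_adj)

lemma norm_pow_range_proj: "norm (pow_range_proj m x) = norm ((adj V ^^ m) x)"
  by (simp add: pow_range_proj_def)

lemma pow_range_proj_absorb: "m \<le> n \<Longrightarrow> pow_range_proj m (pow_range_proj n x) = pow_range_proj n x"
  by (auto simp: pow_range_proj_def funpow_add dest!: le_Suc_ex)

lemma norm_pow_range_proj_diff:
  assumes "m \<le> n"
  shows "(norm (pow_range_proj m x - pow_range_proj n x))\<^sup>2
    = (norm ((adj V ^^ m) x))\<^sup>2 - (norm ((adj V ^^ n) x))\<^sup>2"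
proof -
  have sym: "inner (pow_range_proj k x) y = inner x (pow_range_proj k y)" for k y
    by (metis Re_cinner cinner_pow_range_proj)
  have self: "inner (pow_range_proj l x) x = (norm ((adj V ^^ l) x))\<^sup>2" for l
  proof -
    have "inner (pow_range_proj l x) x = Re (cinner ((adj V ^^ l) x) ((adj V ^^ l) x))"
      by (simp only: pow_range_proj_def Re_cinner[symmetric] cinner_funpow_adj)
    then show ?thesis by (simp add: cinner_self)
  qed
  have cross: "inner (pow_range_proj k x) (pow_range_proj l x) = (norm ((adj V ^^ l) x))\<^sup>2"
    if "k \<le> l" for k l
    using self[of l] by (simp add: sym pow_range_proj_absorb[OF that] inner_commute)
  have "(norm (pow_range_proj m x - pow_range_proj n x))\<^sup>2
      = inner (pow_range_proj m x) (pow_range_proj m x) - 2 * inner (pow_range_proj m x) (pow_range_proj n x)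
        + inner (pow_range_proj n x) (pow_range_proj n x)"
    by (simp add: power2_norm_eq_inner inner_diff_left inner_diff_right inner_commute)
  then show ?thesis using cross[OF assms] cross[of m m] cross[of n n] by simp
qed

lemma Cauchy_pow_range_proj: "Cauchy (\<lambda>m. pow_range_proj m x)"
proof (rule metric_CauchyI)
  fix e :: real assume "e > 0"
  define a where "a n = (norm ((adj V ^^ n) x))\<^sup>2" for n
  have "decseq a" unfolding a_def
    by (rule decseq_SucI) (simp add: norm_adj_funpow_Suc_le power_mono del: funpow.simps)
  then have "Cauchy a"
    using decseq_convergent[of a 0] by (auto simp: a_def intro: LIMSEQ_imp_Cauchy)
  then obtain M where M: "\<And>m n. m \<ge> M \<Longrightarrow> n \<ge> M \<Longrightarrow> dist (a m) (a n) < e\<^sup>2"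
    using \<open>e > 0\<close> unfolding Cauchy_def by (meson zero_less_power)
  have sq: "(norm (pow_range_proj m x - pow_range_proj n x))\<^sup>2 < e\<^sup>2" if "m \<ge> M" "n \<ge> M" for m n
  proof (cases "m \<le> n")
    case True
    then show ?thesis using M[OF that]
      by (simp add: norm_pow_range_proj_diff a_def dist_real_def)
  next
    case False
    then show ?thesis using M[OF that]
      by (simp add: norm_minus_commute[of "pow_range_proj m x"] norm_pow_range_proj_diff a_def dist_real_def)
  qed
  have "dist (pow_range_proj m x) (pow_range_proj n x) < e" if "m \<ge> M" "n \<ge> M" for m n
    using power_less_imp_less_base[OF sq[OF that]] \<open>e > 0\<close> by (simp add: dist_norm)
  then show "\<exists>M. \<forall>m\<ge>M. \<forall>n\<ge>M. dist (pow_range_proj m x) (pow_range_proj n x) < e"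
    by blast
qed

definition unitary_proj :: "'a \<Rightarrow> 'a" where
  "unitary_proj x = lim (\<lambda>m. pow_range_proj m x)"

lemma pow_range_proj_tendsto: "(\<lambda>m. pow_range_proj m x) \<longlonglongrightarrow> unitary_proj x"
  unfolding unitary_proj_def using Cauchy_pow_range_proj convergent_LIMSEQ_iff Cauchy_convergent_iff by blast

lemma pow_range_proj_unitary_proj: "pow_range_proj m (unitary_proj x) = unitary_proj x"
proof -
  have "(\<lambda>n. pow_range_proj m (pow_range_proj n x)) \<longlonglongrightarrow> pow_range_proj m (unitary_proj x)"
    by (rule clinear_op_tendsto[OF clinear_pow_range_proj pow_range_proj_tendsto])
  moreover have "eventually (\<lambda>n. pow_range_proj m (pow_range_proj n x) = pow_range_proj n x) sequentially"
    using pow_range_proj_absorb eventually_sequentially by blast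
  ultimately have "(\<lambda>n. pow_range_proj n x) \<longlonglongrightarrow> pow_range_proj m (unitary_proj x)"
    by (rule Lim_transform_eventually)
  then show ?thesis using pow_range_proj_tendsto LIMSEQ_unique by blast
qed

lemma unitary_proj_idem: "unitary_proj (unitary_proj x) = unitary_proj x"
  using pow_range_proj_tendsto[of "unitary_proj x"] by (simp add: pow_range_proj_unitary_proj LIMSEQ_const_iff)

lemma unitary_proj_eqI:
  assumes "\<And>m. pow_range_proj m x = f m" "f \<longlonglongrightarrow> y"
  shows "unitary_proj x = y"
  using LIMSEQ_unique[OF pow_range_proj_tendsto] assms by auto

lemma clinear_unitary_proj: "clinear_op unitary_proj"
proof -
  note P = clinear_op_simps[OF clinear_pow_range_proj]
  have add: "unitary_proj (x + y) = unitary_proj x + unitary_proj y" for x y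
    by (rule unitary_proj_eqI[OF P(1)]) (intro tendsto_intros pow_range_proj_tendsto)
  have scale: "unitary_proj (cscale c x) = cscale c (unitary_proj x)" for c x
    by (rule unitary_proj_eqI[OF P(6)]) (intro tendsto_intros pow_range_proj_tendsto)
  have "norm ((adj V ^^ m) x) \<le> norm x" for m x
  proof (induction m)
    case (Suc m)
    then show ?case using norm_adj_isometry_le[OF is_isometry, of "(adj V ^^ m) x"] by auto
  qed simp
  then have "norm (pow_range_proj m x) \<le> norm x" for m x
    by (simp add: norm_pow_range_proj)
  then have "norm (unitary_proj x) \<le> norm x" for x
    by (intro LIMSEQ_le_const2[OF tendsto_norm[OF pow_range_proj_tendsto]]) auto
  then have "bounded_linear unitary_proj"
    by (intro bounded_linear_intro[where K=1])
      (auto simp: add scale cscale_of_real[symmetric] simp del: cscale_of_real)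
  then show ?thesis by (simp add: clinear_op_def scale)
qed

lemma cinner_unitary_proj: "cinner (unitary_proj x) y = cinner x (unitary_proj y)"
proof -
  have "(\<lambda>n. cinner x (pow_range_proj n y)) \<longlonglongrightarrow> cinner (unitary_proj x) y"
    using tendsto_cinner[OF pow_range_proj_tendsto tendsto_const] by (simp add: cinner_pow_range_proj)
  then show ?thesis
    using LIMSEQ_unique tendsto_cinner[OF tendsto_const pow_range_proj_tendsto] by blast
qed

lemma unitary_proj_commute:
  assumes "clinear_op W" "\<And>m. pow_range_proj m (W x) = W (pow_range_proj m x)"
  shows "unitary_proj (W x) = W (unitary_proj x)"
  by (rule unitary_proj_eqI[OF assms(2)]) (rule clinear_op_tendsto[OF assms(1) pow_range_proj_tendsto])

lemma unitary_proj_V: "unitary_proj (V x) = V (unitary_proj x)"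
proof -
  have "pow_range_proj (Suc m) (V x) = V (pow_range_proj m x)" for m
    by (simp add: pow_range_proj_def funpow_Suc_right funpow_swap1 is_isometry del: funpow.simps)
  then have "(\<lambda>m. pow_range_proj (Suc m) (V x)) \<longlonglongrightarrow> V (unitary_proj x)"
    using clinear_op_tendsto[OF clinear pow_range_proj_tendsto] by simp
  then show ?thesis using LIMSEQ_unique[OF LIMSEQ_Suc[OF pow_range_proj_tendsto]] by blast
qed

lemma unitary_proj_adj: "unitary_proj (adj V x) = adj V (unitary_proj x)"
proof (rule unitary_proj_eqI)
  show "pow_range_proj m (adj V x) = adj V (pow_range_proj (Suc m) x)" for m
    by (simp add: pow_range_proj_def funpow_swap1[of "adj V"] is_isometry)
  show "(\<lambda>m. adj V (pow_range_proj (Suc m) x)) \<longlonglongrightarrow> adj V (unitary_proj x)"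
    by (rule clinear_op_tendsto[OF clinear_adj LIMSEQ_Suc[OF pow_range_proj_tendsto]])
qed

lemma unitary_proj_in_closed_invariant:
  assumes "closed S" "\<And>y. y \<in> S \<Longrightarrow> V y \<in> S" "\<And>y. y \<in> S \<Longrightarrow> adj V y \<in> S" "x \<in> S"
  shows "unitary_proj x \<in> S"
proof -
  have "(f ^^ m) y \<in> S" if "\<And>y. y \<in> S \<Longrightarrow> f y \<in> S" "y \<in> S" for f y m
    using that by (induction m) auto
  then have "pow_range_proj m x \<in> S" for m
    using assms(2-4) by (simp add: pow_range_proj_def)
  then show ?thesis using closed_sequentially[OF assms(1) _ pow_range_proj_tendsto] by blast
qed

lemma unitary_proj_fixed_norm_adj_funpow:
  assumes "unitary_proj x = x"
  shows "norm ((adj V ^^ m) x) = norm x"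
  using pow_range_proj_unitary_proj[of m x] norm_pow_range_proj[of m x] assms by simp

lemma unitary_proj_fixed_surj:
  assumes "unitary_proj x = x"
  shows "V (adj V x) = x"
  using pow_range_proj_unitary_proj[of 1 x] assms by (simp add: pow_range_proj_def)

lemma unitary_proj_zero_tendsto:
  assumes "unitary_proj x = 0"
  shows "(\<lambda>m. (adj V ^^ m) x) \<longlonglongrightarrow> 0"
  using tendsto_norm[OF pow_range_proj_tendsto[of x]] assms
  by (simp add: norm_pow_range_proj tendsto_norm_zero_iff)

lemma unitary_proj_fixedI:
  assumes "\<And>y. y \<in> S \<Longrightarrow> adj V y \<in> S" "\<And>y. y \<in> S \<Longrightarrow> V (adj V y) = y" "x \<in> S"
  shows "unitary_proj x = x"
proof -
  have "(adj V ^^ m) x \<in> S" for m by (induction m) (use assms in auto)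
  then have "pow_range_proj m x = x" for m
    by (induction m) (auto simp: pow_range_proj_def funpow_swap1[of V] assms(2))
  then show ?thesis by (intro unitary_proj_eqI) auto
qed

end

section \<open>Commuting isometries\<close>

locale commuting_isometries =
  fixes V1 V2 :: "'a::chilbert_space \<Rightarrow> 'a"
  assumes isometric_pair: "isometric_pair V1 V2"
begin

sublocale V1: isometry V1
  using isometric_pair by unfold_locales (simp add: isometric_pair_def)

sublocale V2: isometry V2
  using isometric_pair by unfold_locales (simp add: isometric_pair_def)

abbreviation "A1 \<equiv> adj V1"
abbreviation "A2 \<equiv> adj V2"
abbreviation "T \<equiv> commut V1 V2"

lemma V1_V2_commute: "V1 (V2 x) = V2 (V1 x)"
  using isometric_pair by (metis comp_apply isometric_pair_def)

lemma adj1_adj2_commute: "A1 (A2 x) = A2 (A1 x)"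
proof -
  have "adj (V1 \<circ> V2) = adj (V2 \<circ> V1)"
    using isometric_pair by (simp add: isometric_pair_def)
  then show ?thesis using adj_comp V1.clinear V2.clinear by (metis comp_apply)
qed

lemma clinear_commut: "clinear_op T"
proof -
  have "clinear_op (A2 \<circ> V1)" "clinear_op (V1 \<circ> A2)"
    by (simp_all add: clinear_op_comp V1.clinear V2.clinear_adj)
  then show ?thesis
    unfolding commut_def using clinear_op_diff[of "A2 \<circ> V1" "V1 \<circ> A2"] by (simp add: comp_def)
qed

lemma adj_commut: "adj T x = A1 (V2 x) - V2 (A1 x)"
proof -
  have "adj T = (\<lambda>x. A1 (V2 x) - V2 (A1 x))"
  proof (rule adj_eqI[OF clinear_commut])
    fix x y
    have "cinner (A2 (V1 x)) y = cinner x (A1 (V2 y))"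
      using cinner_adj_left[OF V2.clinear, of "V1 x" y] cinner_adj_right[OF V1.clinear, of x "V2 y"] by simp
    moreover have "cinner (V1 (A2 x)) y = cinner x (V2 (A1 y))"
      using cinner_adj_right[OF V1.clinear, of "A2 x" y] cinner_adj_left[OF V2.clinear, of x "A1 y"] by simp
    ultimately show "cinner (T x) y = cinner x (A1 (V2 y) - V2 (A1 y))"
      by (simp add: commut_def cinner_diff_left cinner_diff_right)
  qed
  then show ?thesis by simp
qed

lemma adj2_V1: "A2 (V1 x) = T x + V1 (A2 x)"
  by (simp add: commut_def)

lemma adj1_V2: "A1 (V2 x) = adj T x + V2 (A1 x)"
  by (simp add: adj_commut)

lemma commut_V2 [simp]: "T (V2 x) = 0"
  by (simp add: commut_def V1_V2_commute V1.is_isometry V2.is_isometry)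

lemma adj_commut_V1 [simp]: "adj T (V1 x) = 0"
  by (simp add: adj_commut V1_V2_commute[symmetric] V1.is_isometry V2.is_isometry)

lemma adj1_commut [simp]: "A1 (T x) = 0"
  by (simp add: commut_def clinear_op_simps[OF V1.clinear_adj] adj1_adj2_commute V1.is_isometry)

lemma adj2_adj_commut [simp]: "A2 (adj T x) = 0"
  by (simp add: adj_commut clinear_op_simps[OF V2.clinear_adj] adj1_adj2_commute[symmetric] V2.is_isometry)

lemma E1_iff: "x \<in> E1 V1 V2 \<longleftrightarrow> A1 x = 0 \<and> A2 x = 0"
proof
  assume "x \<in> E1 V1 V2"
  txt \<open>Pairing the defining identity with \<open>x\<close> gives
    \<open>\<parallel>A1 (A2 x)\<parallel>\<^sup>2 = \<parallel>A1 x\<parallel>\<^sup>2 + \<parallel>A2 x\<parallel>\<^sup>2\<close>, and \<open>A1\<close> is a contraction.\<close>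
  then have eq: "V1 (V2 (A1 (A2 x))) = V1 (A1 x) + V2 (A2 x)"
    by (simp add: E1_def defect_op_def algebra_simps)
  have "inner x (V1 (V2 (A1 (A2 x)))) = (norm (A1 (A2 x)))\<^sup>2"
    by (simp add: inner_adj_left[OF V1.clinear] inner_adj_left[OF V2.clinear] adj1_adj2_commute
        power2_norm_eq_inner)
  moreover have "inner x (V1 (A1 x) + V2 (A2 x)) = (norm (A1 x))\<^sup>2 + (norm (A2 x))\<^sup>2"
    by (simp add: inner_add_right inner_adj_left[OF V1.clinear] inner_adj_left[OF V2.clinear]
        power2_norm_eq_inner)
  ultimately have sum: "(norm (A1 (A2 x)))\<^sup>2 = (norm (A1 x))\<^sup>2 + (norm (A2 x))\<^sup>2"
    using eq by simp
  have "(norm (A1 (A2 x)))\<^sup>2 \<le> (norm (A2 x))\<^sup>2"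
    using norm_adj_isometry_le[OF V1.is_isometry] by (simp add: power_mono)
  then have "A1 x = 0" using sum by simp
  moreover have "A1 (A2 x) = 0"
    using \<open>A1 x = 0\<close> by (simp add: adj1_adj2_commute clinear_op_simps(4)[OF V2.clinear_adj])
  ultimately show "A1 x = 0 \<and> A2 x = 0" using sum by simp
next
  assume "A1 x = 0 \<and> A2 x = 0"
  then show "x \<in> E1 V1 V2"
    by (simp add: E1_def defect_op_def clinear_op_simps(4)[OF V1.clinear_adj]
        clinear_op_simps(4)[OF V1.clinear] clinear_op_simps(4)[OF V2.clinear])
qed

lemma closed_csubspace_E1: "closed_csubspace (E1 V1 V2)"
proof -
  have "E1 V1 V2 = {x. A1 x = 0} \<inter> {x. A2 x = 0}" by (auto simp: E1_iff)
  then show ?thesis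
    by (simp add: closed_csubspace_Int closed_csubspace_ker V1.clinear_adj V2.clinear_adj)
qed

lemma gen_subspace_orth_E1:
  assumes "g \<in> E1 V1 V2" "cinner f g = 0"
  shows "gen_subspace V1 V2 f \<subseteq> orth_compl {g}"
proof -
  have "cinner ((V1 ^^ m) ((V2 ^^ n) f)) g = 0" for m n
  proof (cases m)
    case (Suc k)
    then show ?thesis using assms(1) by (simp add: cinner_adj_right[OF V1.clinear] E1_iff)
  next
    case 0
    then show ?thesis
      using assms by (cases n) (simp_all add: cinner_adj_right[OF V2.clinear] E1_iff)
  qed
  then show ?thesis
    unfolding gen_subspace_def by (intro orth_compl_ccspan) (auto simp: orth_compl_def)
qed

lemma reducing_E1_component:
  assumes N: "reducing V1 V2 N" and f: "f \<in> E1 V1 V2"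
    and pq: "f = p + q" "p \<in> N" "q \<in> orth_compl N"
  shows "p \<in> E1 V1 V2"
proof -
  have Nc: "reducing V1 V2 (orth_compl N)"
    using N by (intro reducing_orth_compl V1.clinear V2.clinear) (auto simp: reducing_def)
  have "A1 p = - A1 q" "A2 p = - A2 q"
    using f pq(1) by (simp_all add: E1_iff clinear_op_simps V1.clinear_adj V2.clinear_adj eq_neg_iff_add_eq_0)
  moreover have "A1 p \<in> N" "A2 p \<in> N" "A1 q \<in> orth_compl N" "A2 q \<in> orth_compl N"
    using N Nc pq(2,3) by (auto simp: reducing_def)
  ultimately have "A1 p \<in> N \<inter> orth_compl N" "A2 p \<in> N \<inter> orth_compl N"
    using csubspace_minus orth_compl_closed_csubspace by (force simp: closed_csubspace_def)+
  then show ?thesis using orth_compl_self by (blast intro: E1_iff[THEN iffD2])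
qed

lemma reducing_adj_commut_vanishing:
  assumes "reducing V1 V2 K" "\<And>y. y \<in> K \<Longrightarrow> T y = 0" "x \<in> K"
  shows "adj T x = 0"
proof -
  have "A1 (V2 x) \<in> K" "V2 (A1 x) \<in> K" "csubspace K"
    using assms(1,3) by (auto simp: reducing_def image_subset_iff closed_csubspace_def)
  then have "adj T x \<in> K" by (simp add: adj_commut csubspace_diff)
  moreover have "cinner (adj T x) y = 0" if "y \<in> K" for y
    using assms(2)[OF that] by (simp add: cinner_adj_left[OF clinear_commut, symmetric])
  ultimately show ?thesis by (metis cinner_self_eq_0)
qed

lemma E1_gen_subspace_eq:
  assumes f: "f \<in> E1 V1 V2" "norm f = 1" and x: "x \<in> E1 V1 V2" "x \<in> gen_subspace V1 V2 f"
  shows "x = cscale (cinner x f) f"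
proof -
  define r where "r = x - cscale (cinner x f) f"
  have E1: "csubspace (E1 V1 V2)" and H: "csubspace (gen_subspace V1 V2 f)"
    using closed_csubspace_E1 closed_csubspace_ccspan
    by (auto simp: closed_csubspace_def gen_subspace_def)
  have "r \<in> E1 V1 V2" "r \<in> gen_subspace V1 V2 f"
    unfolding r_def using f x gen_subspace_self[of f V1 V2]
    by (auto intro!: csubspace_diff[OF E1] csubspace_diff[OF H] csubspace_cscale[OF E1] csubspace_cscale[OF H])
  moreover have "cinner f r = 0"
    using f(2) by (simp add: r_def cinner_diff_right cinner_cscale_right cinner_self cinner_commute[of f x])
  ultimately have "r \<in> orth_compl {r}"
    using gen_subspace_orth_E1 by blast
  then show ?thesis by (simp add: orth_compl_def r_def)
qed

lemma gen_subspace_irreducible: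
  assumes f: "f \<in> E1 V1 V2" "norm f = 1" and H: "reducing V1 V2 (gen_subspace V1 V2 f)"
  shows "irreducible_on V1 V2 (gen_subspace V1 V2 f)"
  unfolding irreducible_on_def
proof (intro allI impI)
  fix N assume NH: "N \<subseteq> gen_subspace V1 V2 f" and N: "reducing V1 V2 N"
  have Nc: "reducing V1 V2 (orth_compl N)"
    using N by (intro reducing_orth_compl V1.clinear V2.clinear) (auto simp: reducing_def)
  have "closed_csubspace N" using N by (simp add: reducing_def)
  then obtain p q where pq: "f = p + q" "p \<in> N" "q \<in> orth_compl N"
    by (rule orth_compl_decomposition)
  have p: "p = cscale (cinner p f) f"
    using E1_gen_subspace_eq[OF f reducing_E1_component[OF N f(1) pq]] pq(2) NH by blast
  show "N = {0} \<or> N = gen_subspace V1 V2 f"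
  proof (cases "cinner p f = 0")
    case False
    then have "f = cscale (1 / cinner p f) p"
      by (subst p) (simp add: cscale_cscale)
    then have "f \<in> N" using pq(2) N csubspace_cscale by (metis reducing_def closed_csubspace_def)
    then have "gen_subspace V1 V2 f \<subseteq> N"
      using N by (intro gen_subspace_subset) (auto simp: reducing_def)
    then show ?thesis using NH by blast
  next
    case True
    then have "f \<in> orth_compl N" using p pq by simp
    then have "gen_subspace V1 V2 f \<subseteq> orth_compl N"
      using Nc by (intro gen_subspace_subset) (auto simp: reducing_def)
    then have "N \<subseteq> {0}" using NH orth_compl_self by blast
    then show ?thesis using N by (auto simp: reducing_def closed_csubspace_def csubspace_0)
  qed
qed

lemma gen_subspace_orthogonal:
  assumes "reducing V1 V2 (gen_subspace V1 V2 f)" "g \<in> E1 V1 V2" "cinner f g = 0"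
    and "x \<in> gen_subspace V1 V2 f" "y \<in> gen_subspace V1 V2 g"
  shows "cinner x y = 0"
proof -
  have "reducing V1 V2 (orth_compl (gen_subspace V1 V2 f))"
    using assms(1) by (intro reducing_orth_compl V1.clinear V2.clinear) (auto simp: reducing_def)
  moreover have "g \<in> orth_compl (gen_subspace V1 V2 f)"
    using orth_compl_sym[OF gen_subspace_orth_E1[OF assms(2,3)]] by blast
  ultimately have "gen_subspace V1 V2 g \<subseteq> orth_compl (gen_subspace V1 V2 f)"
    by (intro gen_subspace_subset) (auto simp: reducing_def)
  then show ?thesis using assms(4,5) by (auto simp: orth_compl_def cinner_eq_0_commute)
qed

lemma reducing_orth_compl_UN:
  assumes "\<And>i. i \<in> I \<Longrightarrow> reducing V1 V2 (M i)"
  shows "reducing V1 V2 (orth_compl (\<Union>i\<in>I. M i))"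
  using assms by (intro reducing_orth_compl V1.clinear V2.clinear) (fastforce simp: reducing_def)+

end

locale normal_commutator = commuting_isometries +
  assumes normal_commut: "normal_op (commut V1 V2)"
begin

lemma commut_V1 [simp]: "T (V1 x) = 0"
  using normal_op_norm_adj[OF normal_commut, of "V1 x"] by simp

lemma adj_commut_V2 [simp]: "adj T (V2 x) = 0"
  using normal_op_norm_adj[OF normal_commut, of "V2 x"] by simp

lemma adj2_commut [simp]: "A2 (T x) = 0"
  by (rule cinner_ext_left)
    (simp add: cinner_adj_left[OF V2.clinear, symmetric] cinner_adj_right[OF clinear_commut])

lemma adj1_adj_commut [simp]: "A1 (adj T x) = 0"
  by (rule cinner_ext_left)
    (simp add: cinner_adj_left[OF V1.clinear, symmetric] cinner_adj_left[OF clinear_commut, symmetric])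

lemma commut_in_E1: "T x \<in> E1 V1 V2" "adj T x \<in> E1 V1 V2"
  by (simp_all add: E1_iff)

lemma commut_orth_E1:
  assumes "x \<in> orth_compl (E1 V1 V2)"
  shows "T x = 0"
proof -
  have "inner (T x) (T x) = inner x (T (adj T x))"
    using normal_commut
    by (simp add: inner_adj_right[OF clinear_commut] normal_op_def) (metis comp_apply)
  also have "\<dots> = 0" using assms commut_in_E1(1)[of "adj T x"] by (simp add: orth_compl_def cinner_eq_0_iff)
  finally show ?thesis by simp
qed

lemma adj1_V2_funpow:
  assumes "A1 f = 0" "T f = cscale \<mu> f"
  shows "A1 ((V2 ^^ Suc n) f) = cscale (cnj \<mu>) ((V2 ^^ n) f)"
proof (induction n)
  case 0
  then show ?case
    using assms normal_op_eigenvector_adj[OF normal_commut assms(2)]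
    by (simp add: adj1_V2 clinear_op_simps(4)[OF V2.clinear])
next
  case (Suc n)
  then show ?case by (simp add: adj1_V2[of "V2 ((V2 ^^ n) f)"] clinear_op_simps(6)[OF V2.clinear])
qed

lemma adj2_V1_funpow:
  assumes "A2 f = 0" "T f = cscale \<mu> f"
  shows "A2 ((V1 ^^ Suc n) f) = cscale \<mu> ((V1 ^^ n) f)"
proof (induction n)
  case 0
  then show ?case using assms by (simp add: adj2_V1 clinear_op_simps(4)[OF V1.clinear])
next
  case (Suc n)
  then show ?case by (simp add: adj2_V1[of "V1 ((V1 ^^ n) f)"] clinear_op_simps(6)[OF V1.clinear])
qed

lemma gen_subspace_reducing:
  assumes f: "f \<in> E1 V1 V2" "T f = cscale \<mu> f"
  shows "reducing V1 V2 (gen_subspace V1 V2 f)"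
proof -
  define G where "G = {(V1 ^^ m) ((V2 ^^ n) f) | m n. True}"
  have "(V1 ^^ m) ((V2 ^^ n) f) \<in> G" for m n unfolding G_def by blast
  then have G: "(V1 ^^ m) ((V2 ^^ n) f) \<in> closure (cspan G)" for m n
    using ccspan_superset[of G] by blast
  have M: "closed_csubspace (closure (cspan G))" "csubspace (closure (cspan G))"
    by (simp_all add: closed_csubspace_ccspan csubspace_closure cspan_csubspace)
  have V1_funpow_V2: "(V1 ^^ m) (V2 y) = V2 ((V1 ^^ m) y)" for m y
    by (induction m) (auto simp: V1_V2_commute)
  have A1f: "A1 f = 0" and A2f: "A2 f = 0" using f(1) by (auto simp: E1_iff)
  have "L x \<in> closure (cspan G)" if L: "L \<in> {V1, V2, A1, A2}" and x: "x \<in> G" for L x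
  proof -
    obtain m n where xmn: "x = (V1 ^^ m) ((V2 ^^ n) f)" using x by (auto simp: G_def)
    have A1x: "A1 x \<in> closure (cspan G)"
    proof (cases m)
      case 0
      then show ?thesis using xmn A1f adj1_V2_funpow[OF A1f f(2)] G[of 0] csubspace_0[OF M(2)]
        by (cases n) (auto intro: csubspace_cscale[OF M(2)])
    qed (use xmn G in \<open>simp add: V1.is_isometry\<close>)
    have A2x: "A2 x \<in> closure (cspan G)"
    proof (cases n)
      case 0
      then show ?thesis using xmn A2f adj2_V1_funpow[OF A2f f(2)] G[of _ 0] csubspace_0[OF M(2)]
        by (cases m) (auto intro: csubspace_cscale[OF M(2)])
    next
      case (Suc k)
      then show ?thesis using xmn G by (simp add: V1_funpow_V2 V2.is_isometry)
    qed
    show ?thesis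
      using L A1x A2x xmn G[of "Suc m" n] G[of m "Suc n"] by (auto simp: V1_funpow_V2)
  qed
  then have "L ` closure (cspan G) \<subseteq> closure (cspan G)" if "L \<in> {V1, V2, A1, A2}" for L
    using that V1.clinear V2.clinear V1.clinear_adj V2.clinear_adj
    by (intro clinear_op_image_ccspan_subset[OF _ M(1)]) auto
  then show ?thesis
    using M(1) by (simp add: reducing_def gen_subspace_def G_def)
qed

end

section \<open>A shift-unitary decomposition of the doubly commuting part\<close>

locale bcl_isometries = commuting_isometries +
  assumes shift_product: "is_shift (V1 \<circ> V2)"
begin

lemma adj_product_funpow: "(adj (V1 \<circ> V2) ^^ m) x = (A1 ^^ m) ((A2 ^^ m) x)"
proof -
  have swap: "A2 ((A1 ^^ k) y) = (A1 ^^ k) (A2 y)" for k y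
    by (induction k) (auto simp: adj1_adj2_commute[symmetric])
  have "((A2 \<circ> A1) ^^ m) x = (A1 ^^ m) ((A2 ^^ m) x)"
  proof (induction m)
    case (Suc m)
    have "((A2 \<circ> A1) ^^ Suc m) x = A2 ((A1 ^^ Suc m) ((A2 ^^ m) x))"
      by (simp add: Suc)
    also have "\<dots> = (A1 ^^ Suc m) ((A2 ^^ Suc m) x)"
      using swap[of "Suc m" "(A2 ^^ m) x"] by simp
    finally show ?case .
  qed simp
  moreover have "adj (V1 \<circ> V2) = A2 \<circ> A1" using adj_comp V1.clinear V2.clinear by blast
  ultimately show ?thesis by simp
qed

context
  fixes K :: "'a set"
  assumes K: "reducing V1 V2 K"
    and commut_K: "\<And>x. x \<in> K \<Longrightarrow> T x = 0"
    and E1_K: "\<And>x. x \<in> K \<Longrightarrow> x \<in> E1 V1 V2 \<Longrightarrow> x = 0"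
begin

lemma K_invariant: "x \<in> K \<Longrightarrow> V1 x \<in> K" "x \<in> K \<Longrightarrow> V2 x \<in> K" "x \<in> K \<Longrightarrow> A1 x \<in> K" "x \<in> K \<Longrightarrow> A2 x \<in> K"
  using K by (auto simp: reducing_def)

lemma csubspace_K: "csubspace K"
  using K by (simp add: reducing_def closed_csubspace_def)

lemma K_funpow: "x \<in> K \<Longrightarrow> (A1 ^^ m) x \<in> K" "x \<in> K \<Longrightarrow> (V1 ^^ m) x \<in> K"
  by (induction m) (auto simp: K_invariant)

lemma adj1_V2_K: "x \<in> K \<Longrightarrow> A1 (V2 x) = V2 (A1 x)"
  using reducing_adj_commut_vanishing[OF K commut_K] by (simp add: adj1_V2)

lemma adj2_V1_K: "x \<in> K \<Longrightarrow> A2 (V1 x) = V1 (A2 x)"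
  by (simp add: adj2_V1 commut_K)

lemma unitary_proj_V2_K: "x \<in> K \<Longrightarrow> V1.unitary_proj (V2 x) = V2 (V1.unitary_proj x)"
proof (intro V1.unitary_proj_commute V2.clinear)
  fix m assume "x \<in> K"
  have "(A1 ^^ m) (V2 x) = V2 ((A1 ^^ m) x)"
    by (induction m) (use \<open>x \<in> K\<close> in \<open>auto simp: adj1_V2_K K_funpow\<close>)
  moreover have "(V1 ^^ m) (V2 y) = V2 ((V1 ^^ m) y)" for y
    by (induction m) (auto simp: V1_V2_commute)
  ultimately show "V1.pow_range_proj m (V2 x) = V2 (V1.pow_range_proj m x)"
    by (simp add: V1.pow_range_proj_def)
qed

lemma unitary_proj_adj2_K: "x \<in> K \<Longrightarrow> V1.unitary_proj (A2 x) = A2 (V1.unitary_proj x)"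
proof (intro V1.unitary_proj_commute V2.clinear_adj)
  fix m assume "x \<in> K"
  have "(A1 ^^ m) (A2 x) = A2 ((A1 ^^ m) x)"
    by (induction m) (auto simp: adj1_adj2_commute)
  moreover have "(V1 ^^ m) (A2 y) = A2 ((V1 ^^ m) y)" if "y \<in> K" for y
    by (induction m) (use that in \<open>auto simp: adj2_V1_K K_funpow\<close>)
  ultimately show "V1.pow_range_proj m (A2 x) = A2 (V1.pow_range_proj m x)"
    using K_funpow(1)[OF \<open>x \<in> K\<close>] by (simp add: V1.pow_range_proj_def)
qed

lemma V1_adj1_on_ker_adj2:
  assumes "x \<in> K" "A2 x = 0"
  shows "V1 (A1 x) = x"
proof -
  define w where "w = x - V1 (A1 x)"
  have "w \<in> K" unfolding w_def using assms(1) K_invariant csubspace_K by (simp add: csubspace_diff)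
  moreover have "A1 w = 0"
    by (simp add: w_def clinear_op_simps(2)[OF V1.clinear_adj] V1.is_isometry)
  moreover have "A2 w = 0"
    using assms adj2_V1_K[OF K_invariant(3)[OF assms(1)]]
    by (simp add: w_def clinear_op_simps(2)[OF V2.clinear_adj] adj1_adj2_commute[symmetric]
        clinear_op_simps(4)[OF V1.clinear_adj] clinear_op_simps(4)[OF V1.clinear])
  ultimately have "w = 0" using E1_K E1_iff by blast
  then show ?thesis by (simp add: w_def)
qed

definition K_us :: "'a set" where
  "K_us = {x \<in> K. V1.unitary_proj x = x}"

definition K_su :: "'a set" where
  "K_su = {x \<in> K. V1.unitary_proj x = 0}"

lemma unitary_proj_K: "x \<in> K \<Longrightarrow> V1.unitary_proj x \<in> K"
  using K by (intro V1.unitary_proj_in_closed_invariant)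
    (auto simp: reducing_def closed_csubspace_def image_subset_iff)

lemma reducing_K_us: "reducing V1 V2 K_us"
proof -
  have "clinear_op (\<lambda>x. V1.unitary_proj x - x)"
    by (intro clinear_op_diff V1.clinear_unitary_proj) (simp add: clinear_op_def bounded_linear_ident)
  moreover have "K_us = K \<inter> {x. V1.unitary_proj x - x = 0}" by (auto simp: K_us_def)
  ultimately have "closed_csubspace K_us"
    using K closed_csubspace_Int closed_csubspace_ker by (metis reducing_def)
  then show ?thesis
    by (auto simp: reducing_def K_us_def K_invariant V1.unitary_proj_V V1.unitary_proj_adj
        unitary_proj_V2_K unitary_proj_adj2_K)
qed

lemma reducing_K_su: "reducing V1 V2 K_su"
proof -
  have "K_su = K \<inter> {x. V1.unitary_proj x = 0}" by (auto simp: K_su_def)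
  then have "closed_csubspace K_su"
    using K by (auto simp: reducing_def intro!: closed_csubspace_Int closed_csubspace_ker V1.clinear_unitary_proj)
  then show ?thesis
    by (auto simp: reducing_def K_su_def K_invariant V1.unitary_proj_V V1.unitary_proj_adj
        unitary_proj_V2_K unitary_proj_adj2_K clinear_op_simps(4)[OF V1.clinear]
        clinear_op_simps(4)[OF V2.clinear] clinear_op_simps(4)[OF V1.clinear_adj]
        clinear_op_simps(4)[OF V2.clinear_adj])
qed

lemma K_us_orth_K_su: "x \<in> K_us \<Longrightarrow> y \<in> K_su \<Longrightarrow> cinner x y = 0"
  using V1.cinner_unitary_proj[of x y] by (simp add: K_us_def K_su_def)

lemma K_decomposition: "K = {x + y | x y. x \<in> K_us \<and> y \<in> K_su}"
proof (intro set_eqI iffI)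
  fix x assume x: "x \<in> K"
  have "V1.unitary_proj x \<in> K_us"
    using unitary_proj_K[OF x] by (simp add: K_us_def V1.unitary_proj_idem)
  moreover have "x - V1.unitary_proj x \<in> K_su"
    using x unitary_proj_K[OF x] csubspace_K
    by (simp add: K_su_def csubspace_diff clinear_op_simps(2)[OF V1.clinear_unitary_proj]
        V1.unitary_proj_idem)
  ultimately show "x \<in> {x + y | x y. x \<in> K_us \<and> y \<in> K_su}"
    by (intro CollectI exI[of _ "V1.unitary_proj x"] exI[of _ "x - V1.unitary_proj x"]) simp
qed (auto simp: K_us_def K_su_def intro: csubspace_add[OF csubspace_K])

lemma unitary_V1_K_us: "unitary_on V1 K_us"
proof -
  have "x \<in> V1 ` K_us" if "x \<in> K_us" for x
    using that reducing_K_us V1.unitary_proj_fixed_surj[of x]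
    by (auto simp: reducing_def K_us_def intro!: image_eqI[of x V1 "A1 x"])
  then show ?thesis
    using reducing_K_us by (auto simp: unitary_on_def reducing_def)
qed

lemma shift_V2_K_us: "shift_on V2 K_us"
  unfolding shift_on_def
proof
  fix x assume x: "x \<in> K_us"
  have "(A2 ^^ m) x \<in> K_us" for m
    by (induction m) (use x reducing_K_us in \<open>auto simp: reducing_def\<close>)
  then have "norm ((A2 ^^ m) x) = norm ((adj (V1 \<circ> V2) ^^ m) x)" for m
    using V1.unitary_proj_fixed_norm_adj_funpow[of "(A2 ^^ m) x" m]
    by (simp add: adj_product_funpow K_us_def)
  moreover have "(\<lambda>m. norm ((adj (V1 \<circ> V2) ^^ m) x)) \<longlonglongrightarrow> 0"
    using shift_product tendsto_norm_zero by (auto simp: is_shift_def)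
  ultimately have "(\<lambda>m. norm ((A2 ^^ m) x)) \<longlonglongrightarrow> 0" by simp
  then show "(\<lambda>m. (A2 ^^ m) x) \<longlonglongrightarrow> 0" by (rule tendsto_norm_zero_iff[THEN iffD1])
qed

lemma shift_V1_K_su: "shift_on V1 K_su"
  by (auto simp: shift_on_def K_su_def intro: V1.unitary_proj_zero_tendsto)

lemma unitary_V2_K_su: "unitary_on V2 K_su"
proof -
  have "x \<in> V2 ` K_su" if x: "x \<in> K_su" for x
  proof -
    have xK: "x \<in> K" and A2x: "A2 x \<in> K_su"
      using x reducing_K_su by (auto simp: K_su_def reducing_def)
    txt \<open>On \<open>K \<inter> ker A2\<close> the isometry \<open>V1\<close> acts unitarily, so \<open>z\<close> is fixed by the
      unitary projection; but \<open>z\<close> also lies in \<open>K_su\<close>.\<close>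
    define z where "z = x - V2 (A2 x)"
    have zK: "z \<in> K" using xK K_invariant csubspace_K by (simp add: z_def csubspace_diff)
    have "V1.unitary_proj z = 0"
      using xK x A2x K_invariant
      by (simp add: z_def K_su_def clinear_op_simps(2)[OF V1.clinear_unitary_proj]
          unitary_proj_V2_K unitary_proj_adj2_K clinear_op_simps(4)[OF V2.clinear]
          clinear_op_simps(4)[OF V2.clinear_adj])
    moreover have "V1.unitary_proj z = z"
    proof (rule V1.unitary_proj_fixedI[where S = "{y \<in> K. A2 y = 0}"])
      show "A1 y \<in> {y \<in> K. A2 y = 0}" if "y \<in> {y \<in> K. A2 y = 0}" for y
        using that K_invariant by (simp add: adj1_adj2_commute[symmetric] clinear_op_simps(4)[OF V1.clinear_adj])
      show "V1 (A1 y) = y" if "y \<in> {y \<in> K. A2 y = 0}" for y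
        using that V1_adj1_on_ker_adj2 by simp
      show "z \<in> {y \<in> K. A2 y = 0}"
        using zK by (simp add: z_def clinear_op_simps(2)[OF V2.clinear_adj] V2.is_isometry)
    qed
    ultimately have "x = V2 (A2 x)" by (simp add: z_def)
    then show ?thesis using A2x by blast
  qed
  then show ?thesis
    using reducing_K_su by (auto simp: unitary_on_def reducing_def)
qed

lemma shift_unitary_on_K: "shift_unitary_on V1 V2 K"
  unfolding shift_unitary_on_def
  using commut_K reducing_K_us reducing_K_su K_us_orth_K_su K_decomposition
    unitary_V1_K_us shift_V2_K_us shift_V1_K_su unitary_V2_K_su
  by (intro conjI ballI exI[of _ K_us] exI[of _ K_su]) (auto simp: K_us_def K_su_def)

end

end

theorem theorem8p9:
  fixes V1 V2 :: "'a::chilbert_space \<Rightarrow> 'a"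
  assumes "compact_normal_pair V1 V2"
  shows "\<exists>F. orthonormal_basis_of F (E1 V1 V2)
     \<and> (\<forall>f\<in>F. \<exists>\<mu>. commut V1 V2 f = cscale \<mu> f)
     \<and> (let H0 = orth_compl (\<Union>f\<in>F. gen_subspace V1 V2 f) in
          (\<forall>f\<in>F. reducing V1 V2 (gen_subspace V1 V2 f))
        \<and> reducing V1 V2 H0
        \<and> (\<forall>f\<in>F. \<forall>g\<in>F. f \<noteq> g \<longrightarrow>
              (\<forall>x\<in>gen_subspace V1 V2 f. \<forall>y\<in>gen_subspace V1 V2 g. cinner x y = 0))
        \<and> closure (cspan (H0 \<union> (\<Union>f\<in>F. gen_subspace V1 V2 f))) = UNIV
        \<and> (\<forall>f\<in>F. irreducible_on V1 V2 (gen_subspace V1 V2 f))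
        \<and> shift_unitary_on V1 V2 H0)"
proof -
  interpret bcl_isometries V1 V2
    using assms by unfold_locales (auto simp: compact_normal_pair_def bcl_pair_def)
  interpret normal_commutator V1 V2
    using assms by unfold_locales (simp add: compact_normal_pair_def)
  obtain F where F: "orthonormal_basis_of F (E1 V1 V2)" and eig: "\<forall>f\<in>F. \<exists>\<mu>. T f = cscale \<mu> f"
    using compact_normal_op_eigenbasis[OF _ normal_commut closed_csubspace_E1] assms commut_in_E1
    by (auto simp: compact_normal_pair_def)
  have FE1: "f \<in> E1 V1 V2" "norm f = 1" if "f \<in> F" for f
    using F that by (auto simp: orthonormal_basis_of_def)
  have red: "reducing V1 V2 (gen_subspace V1 V2 f)" if "f \<in> F" for f
    using eig FE1 that gen_subspace_reducing by blast
  define H0 where "H0 = orth_compl (\<Union>f\<in>F. gen_subspace V1 V2 f)"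
  have redH0: "reducing V1 V2 H0"
    unfolding H0_def using red by (rule reducing_orth_compl_UN)
  have "H0 \<subseteq> orth_compl F"
    unfolding H0_def by (rule orth_compl_antimono) (use gen_subspace_self in blast)
  also have "orth_compl F = orth_compl (E1 V1 V2)"
    using F orth_compl_ccspan_eq[of F] by (simp add: orthonormal_basis_of_def)
  finally have "shift_unitary_on V1 V2 H0"
    using commut_orth_E1 orth_compl_self by (intro shift_unitary_on_K[OF redH0]) auto
  moreover have "cinner x y = 0"
    if "f \<in> F" "g \<in> F" "f \<noteq> g" "x \<in> gen_subspace V1 V2 f" "y \<in> gen_subspace V1 V2 g" for f g x y
    using F that by (intro gen_subspace_orthogonal[OF red[OF that(1)] FE1(1)[OF that(2)] _ that(4,5)])
      (auto simp: orthonormal_basis_of_def)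
  ultimately show ?thesis
    using F eig red redH0 gen_subspace_irreducible[OF FE1 red]
    unfolding Let_def H0_def by (intro exI[of _ F]) (auto simp: ccspan_orth_compl_Un)
qed

end
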